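(* For a Cartesian left additive category $\mathbb{X}$, the category $\mathcal{D}[\mathbb{X}]$ of $\mathsf{D}$-sequences (a subcategory of the category of pre-$\mathsf{D}$-sequences of $\mathbb{X}$, with the same identities, composition, pointwise finite product structure and pointwise additive structure) is a well-defined Cartesian left additive category.
   Context: Composition in diagrammatic order. A Cartesian left additive category is a category with finite products whose hom-sets are commutative monoids with $f(g+h)=fg+fh$, $f0=0$, in which all projections $\pi_j$ are additive ($(f+g)\pi_j=f\pi_j+g\pi_j$, $0\pi_j=0$). Let $\mathsf{P}(A)=A\times A$, $\mathsf{P}(f)=f\times f$. A pre-$\mathsf{D}$-sequence $f_\bullet:A\to B$ is $(f_0,f_1,\dots)$ with $f_n:\mathsf{P}^n(A)\to B$; $(h\cdot f_\bullet)_n=\mathsf{P}^n(h)f_n$; $\mathsf{T}(f_\bullet):\mathsf{P}(A)\to\mathsf{P}(B)$, $\mathsf{T}(f_\bullet)_n=\langle\mathsf{P}^n(\pi_0)f_n,f_{n+1}\rangle$; $\mathsf{D}[f_\bullet]:\mathsf{P}(A)\to B$, $\mathsf{D}[f_\bullet]_n=f_{n+1}$. Identity $i_\bullet$: $i_0=1$, $i_n=\pi_1\cdots\pi_1$ ($n$ times). Composition $(f_\bullet\ast g_\bullet)_n=\mathsf{T}^n(f_\bullet)_0g_n$. Products: terminal object of $\mathbb{X}$, projections $i_\bullet\cdot\pi_j$ where $(i_\bullet\cdot\pi_j)_n=i_n\pi_j$, pairing $\langle f_\bullet,g_\bullet\rangle_n=\langle f_n,g_n\rangle$. Addition: $0_n=0$,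 $(f_\bullet+g_\bullet)_n=f_n+g_n$. A $\mathsf{D}$-sequence is a pre-$\mathsf{D}$-sequence such that for all $n$, with $C=\mathsf{P}^n(A)$: $\langle1,0\rangle\cdot\mathsf{D}^{n+1}[f_\bullet]=0_\bullet$ ($\langle1,0\rangle:C\to C\times C$); $(1\times(\pi_0+\pi_1))\cdot\mathsf{D}^{n+1}[f_\bullet]=(1\times\pi_0)\cdot\mathsf{D}^{n+1}[f_\bullet]+(1\times\pi_1)\cdot\mathsf{D}^{n+1}[f_\bullet]$ (maps $C\times(C\times C)\to C\times C$); $\ell\cdot\mathsf{D}^{n+2}[f_\bullet]=\mathsf{D}^{n+1}[f_\bullet]$ with $\ell=\langle1,0\rangle\times\langle0,1\rangle:C\times C\to(C\times C)\times(C\times C)$; $c\cdot\mathsf{D}^{n+2}[f_\bullet]=\mathsf{D}^{n+2}[f_\bullet]$ with $c=\langle\langle\pi_0\pi_0,\pi_1\pi_0\rangle,\langle\pi_0\pi_1,\pi_1\pi_1\rangle\rangle$ on $(C\times C)\times(C\times C)$. *)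

theory Defs
  imports Main
begin

text \<open>A category with chosen finite products and a left additive structure,
  presented with hom-sets indexed by objects. Composition is in diagrammatic order:
  cmp A B C f g is "f then g" for f : A -> B, g : B -> C.\<close>

record ('o, 'm) clac =
  obj  :: "'o set"
  hom  :: "'o \<Rightarrow> 'o \<Rightarrow> 'm set"
  idm  :: "'o \<Rightarrow> 'm"
  cmp  :: "'o \<Rightarrow> 'o \<Rightarrow> 'o \<Rightarrow> 'm \<Rightarrow> 'm \<Rightarrow> 'm"
  trm  :: "'o"
  bng  :: "'o \<Rightarrow> 'm"
  prd  :: "'o \<Rightarrow> 'o \<Rightarrow> 'o"
  pr0  :: "'o \<Rightarrow> 'o \<Rightarrow> 'm"
  pr1  :: "'o \<Rightarrow> 'o \<Rightarrow> 'm"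
  pair :: "'o \<Rightarrow> 'o \<Rightarrow> 'o \<Rightarrow> 'm \<Rightarrow> 'm \<Rightarrow> 'm"
  zro  :: "'o \<Rightarrow> 'o \<Rightarrow> 'm"
  add  :: "'o \<Rightarrow> 'o \<Rightarrow> 'm \<Rightarrow> 'm \<Rightarrow> 'm"

definition is_category :: "('o, 'm) clac \<Rightarrow> bool" where
  "is_category X \<longleftrightarrow>
     (\<forall>A\<in>obj X. idm X A \<in> hom X A A) \<and>
     (\<forall>A\<in>obj X. \<forall>B\<in>obj X. \<forall>C\<in>obj X. \<forall>f\<in>hom X A B. \<forall>g\<in>hom X B C.
        cmp X A B C f g \<in> hom X A C) \<and>
     (\<forall>A\<in>obj X. \<forall>B\<in>obj X. \<forall>f\<in>hom X A B.
        cmp X A A B (idm X A) f = f \<and> cmp X A B B f (idm X B) = f) \<and>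
     (\<forall>A\<in>obj X. \<forall>B\<in>obj X. \<forall>C\<in>obj X. \<forall>D\<in>obj X.
        \<forall>f\<in>hom X A B. \<forall>g\<in>hom X B C. \<forall>h\<in>hom X C D.
        cmp X A C D (cmp X A B C f g) h = cmp X A B D f (cmp X B C D g h))"

definition has_finite_products :: "('o, 'm) clac \<Rightarrow> bool" where
  "has_finite_products X \<longleftrightarrow>
     trm X \<in> obj X \<and>
     (\<forall>A\<in>obj X. bng X A \<in> hom X A (trm X) \<and> (\<forall>f\<in>hom X A (trm X). f = bng X A)) \<and>
     (\<forall>A\<in>obj X. \<forall>B\<in>obj X.
        prd X A B \<in> obj X \<and>
        pr0 X A B \<in> hom X (prd X A B) A \<and>
        pr1 X A B \<in> hom X (prd X A B) B \<and>
        (\<forall>C\<in>obj X. \<forall>f\<in>hom X C A. \<forall>g\<in>hom X C B.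
           pair X C A B f g \<in> hom X C (prd X A B) \<and>
           cmp X C (prd X A B) A (pair X C A B f g) (pr0 X A B) = f \<and>
           cmp X C (prd X A B) B (pair X C A B f g) (pr1 X A B) = g) \<and>
        (\<forall>C\<in>obj X. \<forall>h\<in>hom X C (prd X A B).
           h = pair X C A B (cmp X C (prd X A B) A h (pr0 X A B))
                            (cmp X C (prd X A B) B h (pr1 X A B))))"

definition is_left_additive :: "('o, 'm) clac \<Rightarrow> bool" where
  "is_left_additive X \<longleftrightarrow>
     (\<forall>A\<in>obj X. \<forall>B\<in>obj X.
        zro X A B \<in> hom X A B \<and>
        (\<forall>f\<in>hom X A B. \<forall>g\<in>hom X A B. add X A B f g \<in> hom X A B) \<and>
        (\<forall>f\<in>hom X A B. \<forall>g\<in>hom X A B. \<forall>h\<in>hom X A B.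
           add X A B (add X A B f g) h = add X A B f (add X A B g h)) \<and>
        (\<forall>f\<in>hom X A B. \<forall>g\<in>hom X A B. add X A B f g = add X A B g f) \<and>
        (\<forall>f\<in>hom X A B. add X A B f (zro X A B) = f)) \<and>
     (\<forall>A\<in>obj X. \<forall>B\<in>obj X. \<forall>C\<in>obj X. \<forall>f\<in>hom X A B.
        (\<forall>g\<in>hom X B C. \<forall>h\<in>hom X B C.
           cmp X A B C f (add X B C g h) = add X A C (cmp X A B C f g) (cmp X A B C f h)) \<and>
        cmp X A B C f (zro X B C) = zro X A C)"

definition projections_additive :: "('o, 'm) clac \<Rightarrow> bool" where
  "projections_additive X \<longleftrightarrow>
     (\<forall>A\<in>obj X. \<forall>B\<in>obj X. \<forall>C\<in>obj X.
        (\<forall>f\<in>hom X C (prd X A B). \<forall>g\<in>hom X C (prd X A B).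
           cmp X C (prd X A B) A (add X C (prd X A B) f g) (pr0 X A B)
             = add X C A (cmp X C (prd X A B) A f (pr0 X A B)) (cmp X C (prd X A B) A g (pr0 X A B)) \<and>
           cmp X C (prd X A B) B (add X C (prd X A B) f g) (pr1 X A B)
             = add X C B (cmp X C (prd X A B) B f (pr1 X A B)) (cmp X C (prd X A B) B g (pr1 X A B))) \<and>
        cmp X C (prd X A B) A (zro X C (prd X A B)) (pr0 X A B) = zro X C A \<and>
        cmp X C (prd X A B) B (zro X C (prd X A B)) (pr1 X A B) = zro X C B)"

definition is_CLAC :: "('o, 'm) clac \<Rightarrow> bool" where
  "is_CLAC X \<longleftrightarrow> is_category X \<and> has_finite_products X \<and> is_left_additive X
                  \<and> projections_additive X"

definition PO :: "('o, 'm) clac \<Rightarrow> 'o \<Rightarrow> 'o" where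
  "PO X A = prd X A A"

definition Pn :: "('o, 'm) clac \<Rightarrow> nat \<Rightarrow> 'o \<Rightarrow> 'o" where
  "Pn X n A = (PO X ^^ n) A"

definition tms :: "('o, 'm) clac \<Rightarrow> 'o \<Rightarrow> 'o \<Rightarrow> 'o \<Rightarrow> 'o \<Rightarrow> 'm \<Rightarrow> 'm \<Rightarrow> 'm" where
  "tms X A B A' B' a b =
     pair X (prd X A B) A' B' (cmp X (prd X A B) A A' (pr0 X A B) a)
                              (cmp X (prd X A B) B B' (pr1 X A B) b)"

definition PM :: "('o, 'm) clac \<Rightarrow> 'o \<Rightarrow> 'o \<Rightarrow> 'm \<Rightarrow> 'm" where
  "PM X A B h = tms X A A B B h h"

fun Pnm :: "('o, 'm) clac \<Rightarrow> nat \<Rightarrow> 'o \<Rightarrow> 'o \<Rightarrow> 'm \<Rightarrow> 'm" where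
  "Pnm X 0 A B h = h"
| "Pnm X (Suc n) A B h = PM X (Pn X n A) (Pn X n B) (Pnm X n A B h)"

definition pre_dseq :: "('o, 'm) clac \<Rightarrow> 'o \<Rightarrow> 'o \<Rightarrow> (nat \<Rightarrow> 'm) \<Rightarrow> bool" where
  "pre_dseq X A B f \<longleftrightarrow> (\<forall>n. f n \<in> hom X (Pn X n A) B)"

definition act :: "('o, 'm) clac \<Rightarrow> 'o \<Rightarrow> 'o \<Rightarrow> 'o \<Rightarrow> 'm \<Rightarrow> (nat \<Rightarrow> 'm) \<Rightarrow> nat \<Rightarrow> 'm" where
  "act X A' A B h f = (\<lambda>n. cmp X (Pn X n A') (Pn X n A) B (Pnm X n A' A h) (f n))"

definition Tseq :: "('o, 'm) clac \<Rightarrow> 'o \<Rightarrow> 'o \<Rightarrow> (nat \<Rightarrow> 'm) \<Rightarrow> nat \<Rightarrow> 'm" where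
  "Tseq X A B f = (\<lambda>n. pair X (Pn X n (PO X A)) B B
      (cmp X (Pn X n (PO X A)) (Pn X n A) B (Pnm X n (PO X A) A (pr0 X A A)) (f n))
      (f (Suc n)))"

fun Tn :: "('o, 'm) clac \<Rightarrow> nat \<Rightarrow> 'o \<Rightarrow> 'o \<Rightarrow> (nat \<Rightarrow> 'm) \<Rightarrow> nat \<Rightarrow> 'm" where
  "Tn X 0 A B f = f"
| "Tn X (Suc n) A B f = Tseq X (Pn X n A) (Pn X n B) (Tn X n A B f)"

definition Dk :: "nat \<Rightarrow> (nat \<Rightarrow> 'm) \<Rightarrow> nat \<Rightarrow> 'm" where
  "Dk k f = (\<lambda>n. f (n + k))"

fun iseq :: "('o, 'm) clac \<Rightarrow> 'o \<Rightarrow> nat \<Rightarrow> 'm" where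
  "iseq X C 0 = idm X C"
| "iseq X C (Suc n) = cmp X (Pn X (Suc n) C) (Pn X n C) C
                          (pr1 X (Pn X n C) (Pn X n C)) (iseq X C n)"

definition dcomp :: "('o, 'm) clac \<Rightarrow> 'o \<Rightarrow> 'o \<Rightarrow> 'o \<Rightarrow> (nat \<Rightarrow> 'm) \<Rightarrow> (nat \<Rightarrow> 'm) \<Rightarrow> nat \<Rightarrow> 'm" where
  "dcomp X A B C f g = (\<lambda>n. cmp X (Pn X n A) (Pn X n B) C (Tn X n A B f 0) (g n))"

definition dseq :: "('o, 'm) clac \<Rightarrow> 'o \<Rightarrow> 'o \<Rightarrow> (nat \<Rightarrow> 'm) \<Rightarrow> bool" where
  "dseq X A B f \<longleftrightarrow> pre_dseq X A B f \<and>
    (\<forall>n. let C = Pn X n A; PC = PO X C; PPC = PO X PC; CPC = prd X C PC;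
             i10 = pair X C C C (idm X C) (zro X C C);
             i01 = pair X C C C (zro X C C) (idm X C);
             D1 = Dk (Suc n) f; D2 = Dk (Suc (Suc n)) f;
             s = add X PC C (pr0 X C C) (pr1 X C C);
             ell = tms X C C PC PC i10 i01;
             cc = pair X PPC PC PC
                    (pair X PPC C C (cmp X PPC PC C (pr0 X PC PC) (pr0 X C C))
                                    (cmp X PPC PC C (pr1 X PC PC) (pr0 X C C)))
                    (pair X PPC C C (cmp X PPC PC C (pr0 X PC PC) (pr1 X C C))
                                    (cmp X PPC PC C (pr1 X PC PC) (pr1 X C C)))
         in act X C PC B i10 D1 = (\<lambda>m. zro X (Pn X m C) B)
          \<and> act X CPC PC B (tms X C PC C C (idm X C) s) D1
              = (\<lambda>m. add X (Pn X m CPC) B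
                        (act X CPC PC B (tms X C PC C C (idm X C) (pr0 X C C)) D1 m)
                        (act X CPC PC B (tms X C PC C C (idm X C) (pr1 X C C)) D1 m))
          \<and> act X PC PPC B ell D2 = D1
          \<and> act X PPC PPC B cc D2 = D2)"

definition DX :: "('o, 'm) clac \<Rightarrow> ('o, nat \<Rightarrow> 'm) clac" where
  "DX X = \<lparr> obj = obj X,
            hom = (\<lambda>A B. {f. dseq X A B f}),
            idm = iseq X,
            cmp = dcomp X,
            trm = trm X,
            bng = (\<lambda>A n. bng X (Pn X n A)),
            prd = prd X,
            pr0 = (\<lambda>A B n. cmp X (Pn X n (prd X A B)) (prd X A B) A
                              (iseq X (prd X A B) n) (pr0 X A B)),
            pr1 = (\<lambda>A B n. cmp X (Pn X n (prd X A B)) (prd X A B) B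
                              (iseq X (prd X A B) n) (pr1 X A B)),
            pair = (\<lambda>C A B f g n. pair X (Pn X n C) A B (f n) (g n)),
            zro = (\<lambda>A B n. zro X (Pn X n A) B),
            add = (\<lambda>A B f g n. add X (Pn X n A) B (f n) (g n)) \<rparr>"

end

theory Submission
  imports Defs
begin

text \<open>
  A pre-D-sequence \<open>f : A \<rightarrow> B\<close> is a D-sequence iff for every \<open>n\<close> the shift
  \<open>D\<^sup>n[f]\<close> satisfies the axioms at level 0, over the object \<open>P\<^sup>n(A)\<close>.  So it suffices
  to see that the level-0 axioms survive the operations of \<open>\<D>[X]\<close>.  For pairing, sums and
  zero this holds pointwise.  Precomposition \<open>h \<cdot> f\<close> and postcomposition \<open>f ; h\<close> with
  a map \<open>h\<close> of X that is additive (projections, their images under \<open>P\<^sup>n\<close>, the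
  components of the identity sequence) preserve them, because the structure maps
  \<open>\<langle>1,0\<rangle>\<close>, \<open>1 \<times> (\<pi>\<^sub>0 + \<pi>\<^sub>1)\<close>, \<open>\<ell>\<close> and \<open>c\<close> of the axioms are natural with
  respect to additive maps.  For composition, \<open>D\<^sup>n[f * g] = T\<^sup>n(f) * D\<^sup>n[g]\<close>, \<open>T\<^sup>n(f)\<close> is
  again a D-sequence, and every structure map commutes with \<open>T(f)\<close>, so the axioms for
  \<open>T(f) * D[g]\<close> reduce to those of \<open>D[g]\<close>.  The category, product and additive laws
  already hold for pre-D-sequences; associativity rests on the functoriality
  \<open>T(f * g) = T(f) * T(g)\<close>.
\<close>

section \<open>Cartesian left additive categories\<close>

lemma Pn_0[simp]: "Pn X 0 A = A" by (simp add: Pn_def)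
lemma Pn_Suc[simp]: "Pn X (Suc n) A = prd X (Pn X n A) (Pn X n A)"
  by (simp add: Pn_def PO_def)
lemma Pn_prd[simp]: "Pn X n (prd X A A) = prd X (Pn X n A) (Pn X n A)"
  by (induct n) auto
lemma Pn_Pn[simp]: "Pn X n (Pn X k A) = Pn X (n+k) A"
  by (induct n) auto
declare PO_def[simp]

locale cartesian_left_additive =
  fixes X :: "('o,'m) clac"
  assumes cartesian_left_additive: "is_CLAC X"
begin

lemma category_X: "is_category X" and products_X: "has_finite_products X" and left_additive_X: "is_left_additive X"
  and projections_additive_X: "projections_additive X"
  using cartesian_left_additive unfolding is_CLAC_def by auto

lemma trm_obj[simp]: "trm X \<in> obj X" using products_X by (simp add: has_finite_products_def)
lemma prd_obj[simp]: "A \<in> obj X \<Longrightarrow> B \<in> obj X \<Longrightarrow> prd X A B \<in> obj X"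
  using products_X by (simp add: has_finite_products_def)
lemma Pn_obj[simp]: "A \<in> obj X \<Longrightarrow> Pn X n A \<in> obj X"
  by (induct n) auto

text \<open>Objects in the typing rules are passed as equations, so that the simplifier can apply
  them when an object occurs in a different but equal form, such as \<open>Pn X (Suc n) A\<close>
  versus \<open>prd X (Pn X n A) (Pn X n A)\<close>.\<close>

lemma idm_hom[simp]: "A \<in> obj X \<Longrightarrow> A' = A \<Longrightarrow> A'' = A \<Longrightarrow> idm X A \<in> hom X A' A''"
  using category_X by (simp add: is_category_def)
lemma cmp_hom[simp]: "A' = A \<Longrightarrow> C' = C \<Longrightarrow> A \<in> obj X \<Longrightarrow> B \<in> obj X \<Longrightarrow> C \<in> obj X \<Longrightarrow>
   f \<in> hom X A B \<Longrightarrow> g \<in> hom X B C \<Longrightarrow> cmp X A B C f g \<in> hom X A' C'"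
  using category_X by (simp add: is_category_def)
lemma pr0_hom[simp]: "A \<in> obj X \<Longrightarrow> B \<in> obj X \<Longrightarrow> P = prd X A B \<Longrightarrow> A' = A \<Longrightarrow> pr0 X A B \<in> hom X P A'"
  using products_X by (simp add: has_finite_products_def)
lemma pr1_hom[simp]: "A \<in> obj X \<Longrightarrow> B \<in> obj X \<Longrightarrow> P = prd X A B \<Longrightarrow> B' = B \<Longrightarrow> pr1 X A B \<in> hom X P B'"
  using products_X by (simp add: has_finite_products_def)
lemma pair_hom[simp]: "C' = C \<Longrightarrow> P = prd X A B \<Longrightarrow> C \<in> obj X \<Longrightarrow> A \<in> obj X \<Longrightarrow> B \<in> obj X \<Longrightarrow>
   f \<in> hom X C A \<Longrightarrow> g \<in> hom X C B \<Longrightarrow> pair X C A B f g \<in> hom X C' P"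
  using products_X by (simp add: has_finite_products_def)
lemma zro_hom[simp]: "A' = A \<Longrightarrow> B' = B \<Longrightarrow> A \<in> obj X \<Longrightarrow> B \<in> obj X \<Longrightarrow> zro X A B \<in> hom X A' B'"
  using left_additive_X by (simp add: is_left_additive_def)
lemma add_hom[simp]: "A' = A \<Longrightarrow> B' = B \<Longrightarrow> A \<in> obj X \<Longrightarrow> B \<in> obj X \<Longrightarrow> f \<in> hom X A B \<Longrightarrow> g \<in> hom X A B
   \<Longrightarrow> add X A B f g \<in> hom X A' B'"
  using left_additive_X by (simp add: is_left_additive_def)
lemma bng_hom[simp]: "A' = A \<Longrightarrow> T = trm X \<Longrightarrow> A \<in> obj X \<Longrightarrow> bng X A \<in> hom X A' T"
  using products_X by (simp add: has_finite_products_def)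
lemma bng_uniq: "A \<in> obj X \<Longrightarrow> f \<in> hom X A (trm X) \<Longrightarrow> f = bng X A"
  using products_X by (simp add: has_finite_products_def)

lemma cmp_idm_left[simp]: "A \<in> obj X \<Longrightarrow> B \<in> obj X \<Longrightarrow> f \<in> hom X A B \<Longrightarrow> cmp X A A B (idm X A) f = f"
  using category_X by (simp add: is_category_def)
lemma cmp_idm_right[simp]: "A \<in> obj X \<Longrightarrow> B \<in> obj X \<Longrightarrow> f \<in> hom X A B \<Longrightarrow> cmp X A B B f (idm X B) = f"
  using category_X by (simp add: is_category_def)
lemma cmp_assoc[simp]: "A \<in> obj X \<Longrightarrow> B \<in> obj X \<Longrightarrow> C \<in> obj X \<Longrightarrow> D \<in> obj X \<Longrightarrow>
  f \<in> hom X A B \<Longrightarrow> g \<in> hom X B C \<Longrightarrow> h \<in> hom X C D \<Longrightarrow>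
  cmp X A C D (cmp X A B C f g) h = cmp X A B D f (cmp X B C D g h)"
  using category_X by (simp add: is_category_def)

lemma pair_pr0[simp]: "C \<in> obj X \<Longrightarrow> A \<in> obj X \<Longrightarrow> B \<in> obj X \<Longrightarrow> f \<in> hom X C A \<Longrightarrow> g \<in> hom X C B \<Longrightarrow>
  cmp X C (prd X A B) A (pair X C A B f g) (pr0 X A B) = f"
  using products_X by (simp add: has_finite_products_def)
lemma pair_pr1[simp]: "C \<in> obj X \<Longrightarrow> A \<in> obj X \<Longrightarrow> B \<in> obj X \<Longrightarrow> f \<in> hom X C A \<Longrightarrow> g \<in> hom X C B \<Longrightarrow>
  cmp X C (prd X A B) B (pair X C A B f g) (pr1 X A B) = g"
  using products_X by (simp add: has_finite_products_def)
lemma pair_eta[simp]: "C \<in> obj X \<Longrightarrow> A \<in> obj X \<Longrightarrow> B \<in> obj X \<Longrightarrow> h \<in> hom X C (prd X A B) \<Longrightarrow>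
  pair X C A B (cmp X C (prd X A B) A h (pr0 X A B)) (cmp X C (prd X A B) B h (pr1 X A B)) = h"
  using products_X by (simp add: has_finite_products_def)

lemma pair_pr0'[simp]: "C \<in> obj X \<Longrightarrow> A \<in> obj X \<Longrightarrow> B \<in> obj X \<Longrightarrow> D \<in> obj X \<Longrightarrow> f \<in> hom X C A \<Longrightarrow>
  g \<in> hom X C B \<Longrightarrow>
  h \<in> hom X A D \<Longrightarrow>
  cmp X C (prd X A B) D (pair X C A B f g) (cmp X (prd X A B) A D (pr0 X A B) h)
    = cmp X C A D f h"
  by (simp flip: cmp_assoc)
lemma pair_pr1'[simp]: "C \<in> obj X \<Longrightarrow> A \<in> obj X \<Longrightarrow> B \<in> obj X \<Longrightarrow> D \<in> obj X \<Longrightarrow> f \<in> hom X C A \<Longrightarrow>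
  g \<in> hom X C B \<Longrightarrow>
  h \<in> hom X B D \<Longrightarrow>
  cmp X C (prd X A B) D (pair X C A B f g) (cmp X (prd X A B) B D (pr1 X A B) h)
    = cmp X C B D g h"
  by (simp flip: cmp_assoc)

lemma prod_ext: "C \<in> obj X \<Longrightarrow> A \<in> obj X \<Longrightarrow> B \<in> obj X \<Longrightarrow> h \<in> hom X C (prd X A B) \<Longrightarrow>
  k \<in> hom X C (prd X A B) \<Longrightarrow>
  cmp X C (prd X A B) A h (pr0 X A B) = cmp X C (prd X A B) A k (pr0 X A B) \<Longrightarrow>
  cmp X C (prd X A B) B h (pr1 X A B) = cmp X C (prd X A B) B k (pr1 X A B) \<Longrightarrow> h = k"
  by (metis pair_eta)

lemma pair_eq_iff[simp]: "C \<in> obj X \<Longrightarrow> A \<in> obj X \<Longrightarrow> B \<in> obj X \<Longrightarrow> f \<in> hom X C A \<Longrightarrow> g \<in> hom X C B \<Longrightarrow>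
  f' \<in> hom X C A \<Longrightarrow> g' \<in> hom X C B \<Longrightarrow>
  pair X C A B f g = pair X C A B f' g' \<longleftrightarrow> f = f' \<and> g = g'"
  by (metis pair_pr0 pair_pr1)

lemma cmp_pair[simp]: "D \<in> obj X \<Longrightarrow> C \<in> obj X \<Longrightarrow> A \<in> obj X \<Longrightarrow> B \<in> obj X \<Longrightarrow> h \<in> hom X D C \<Longrightarrow>
  f \<in> hom X C A \<Longrightarrow> g \<in> hom X C B \<Longrightarrow>
  cmp X D C (prd X A B) h (pair X C A B f g) = pair X D A B (cmp X D C A h f) (cmp X D C B h g)"
  by (rule prod_ext[of D A B]) simp_all

lemma pair_pr_id[simp]: "A \<in> obj X \<Longrightarrow> B \<in> obj X \<Longrightarrow>
  pair X (prd X A B) A B (pr0 X A B) (pr1 X A B) = idm X (prd X A B)"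
  by (rule prod_ext[of "prd X A B" A B]) auto

lemma add_assoc: "A \<in> obj X \<Longrightarrow> B \<in> obj X \<Longrightarrow> f \<in> hom X A B \<Longrightarrow> g \<in> hom X A B \<Longrightarrow> h \<in> hom X A B \<Longrightarrow>
  add X A B (add X A B f g) h = add X A B f (add X A B g h)"
  using left_additive_X unfolding is_left_additive_def by blast
lemma add_comm: "A \<in> obj X \<Longrightarrow> B \<in> obj X \<Longrightarrow> f \<in> hom X A B \<Longrightarrow> g \<in> hom X A B \<Longrightarrow>
  add X A B f g = add X A B g f"
  using left_additive_X unfolding is_left_additive_def by blast
lemma add_zro_right[simp]: "A \<in> obj X \<Longrightarrow> B \<in> obj X \<Longrightarrow> f \<in> hom X A B \<Longrightarrow> add X A B f (zro X A B) = f"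
  using left_additive_X by (simp add: is_left_additive_def)
lemma add_zro_left[simp]: "A \<in> obj X \<Longrightarrow> B \<in> obj X \<Longrightarrow> f \<in> hom X A B \<Longrightarrow> add X A B (zro X A B) f = f"
  by (subst add_comm) auto
lemma add_left_comm: "A \<in> obj X \<Longrightarrow> B \<in> obj X \<Longrightarrow> f \<in> hom X A B \<Longrightarrow> g \<in> hom X A B \<Longrightarrow> h \<in> hom X A B \<Longrightarrow>
  add X A B f (add X A B g h) = add X A B g (add X A B f h)"
  by (metis add_assoc add_comm)
lemma add_interchange: "A \<in> obj X \<Longrightarrow> B \<in> obj X \<Longrightarrow> a \<in> hom X A B \<Longrightarrow> b \<in> hom X A B \<Longrightarrow> c \<in> hom X A B \<Longrightarrow>
  d \<in> hom X A B \<Longrightarrow>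
  add X A B (add X A B a b) (add X A B c d) = add X A B (add X A B a c) (add X A B b d)"
  by (simp add: add_assoc add_left_comm[of A B b c d])

lemma cmp_add[simp]: "A \<in> obj X \<Longrightarrow> B \<in> obj X \<Longrightarrow> C \<in> obj X \<Longrightarrow> f \<in> hom X A B \<Longrightarrow> g \<in> hom X B C \<Longrightarrow>
  h \<in> hom X B C \<Longrightarrow>
  cmp X A B C f (add X B C g h) = add X A C (cmp X A B C f g) (cmp X A B C f h)"
  using left_additive_X by (simp add: is_left_additive_def)
lemma cmp_zro[simp]: "A \<in> obj X \<Longrightarrow> B \<in> obj X \<Longrightarrow> C \<in> obj X \<Longrightarrow> f \<in> hom X A B \<Longrightarrow>
  cmp X A B C f (zro X B C) = zro X A C"
  using left_additive_X by (simp add: is_left_additive_def)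
lemma cmp_add_pr0[simp]: "A \<in> obj X \<Longrightarrow> B \<in> obj X \<Longrightarrow> C \<in> obj X \<Longrightarrow> f \<in> hom X C (prd X A B) \<Longrightarrow>
  g \<in> hom X C (prd X A B) \<Longrightarrow>
  cmp X C (prd X A B) A (add X C (prd X A B) f g) (pr0 X A B)
    = add X C A (cmp X C (prd X A B) A f (pr0 X A B)) (cmp X C (prd X A B) A g (pr0 X A B))"
  using projections_additive_X by (simp add: projections_additive_def)
lemma cmp_add_pr1[simp]: "A \<in> obj X \<Longrightarrow> B \<in> obj X \<Longrightarrow> C \<in> obj X \<Longrightarrow> f \<in> hom X C (prd X A B) \<Longrightarrow>
  g \<in> hom X C (prd X A B) \<Longrightarrow>
  cmp X C (prd X A B) B (add X C (prd X A B) f g) (pr1 X A B)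
    = add X C B (cmp X C (prd X A B) B f (pr1 X A B)) (cmp X C (prd X A B) B g (pr1 X A B))"
  using projections_additive_X by (simp add: projections_additive_def)
lemma cmp_zro_pr0[simp]: "A \<in> obj X \<Longrightarrow> B \<in> obj X \<Longrightarrow> C \<in> obj X \<Longrightarrow>
  cmp X C (prd X A B) A (zro X C (prd X A B)) (pr0 X A B) = zro X C A"
  using projections_additive_X by (simp add: projections_additive_def)
lemma cmp_zro_pr1[simp]: "A \<in> obj X \<Longrightarrow> B \<in> obj X \<Longrightarrow> C \<in> obj X \<Longrightarrow>
  cmp X C (prd X A B) B (zro X C (prd X A B)) (pr1 X A B) = zro X C B"
  using projections_additive_X by (simp add: projections_additive_def)

lemma add_pair[simp]: "C \<in> obj X \<Longrightarrow> A \<in> obj X \<Longrightarrow> B \<in> obj X \<Longrightarrow> f \<in> hom X C A \<Longrightarrow> g \<in> hom X C B \<Longrightarrow>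
  f' \<in> hom X C A \<Longrightarrow> g' \<in> hom X C B \<Longrightarrow>
  add X C (prd X A B) (pair X C A B f g) (pair X C A B f' g')
    = pair X C A B (add X C A f f') (add X C B g g')"
  by (rule prod_ext[of C A B]) auto
lemma pair_zro[simp]: "C \<in> obj X \<Longrightarrow> A \<in> obj X \<Longrightarrow> B \<in> obj X \<Longrightarrow>
  pair X C A B (zro X C A) (zro X C B) = zro X C (prd X A B)"
  by (rule prod_ext[of C A B]) auto

definition additive :: "'o \<Rightarrow> 'o \<Rightarrow> 'm \<Rightarrow> bool" where
  "additive A B h \<longleftrightarrow> h \<in> hom X A B \<and>
     (\<forall>Z\<in>obj X. \<forall>u\<in>hom X Z A. \<forall>v\<in>hom X Z A. cmp X Z A B (add X Z A u v) h = add X Z B (cmp X Z A B u h) (cmp X Z A B v h)) \<and>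
     (\<forall>Z\<in>obj X. cmp X Z A B (zro X Z A) h = zro X Z B)"

lemma additive_hom: "additive A B h \<Longrightarrow> h \<in> hom X A B" by (simp add: additive_def)
lemma additive_add: "additive A B h \<Longrightarrow> Z \<in> obj X \<Longrightarrow> u \<in> hom X Z A \<Longrightarrow> v \<in> hom X Z A \<Longrightarrow>
  cmp X Z A B (add X Z A u v) h = add X Z B (cmp X Z A B u h) (cmp X Z A B v h)"
  by (simp add: additive_def)
lemma additive_zro: "additive A B h \<Longrightarrow> Z \<in> obj X \<Longrightarrow> cmp X Z A B (zro X Z A) h = zro X Z B"
  by (simp add: additive_def)

lemma additive_pr0: "A \<in> obj X \<Longrightarrow> B \<in> obj X \<Longrightarrow> additive (prd X A B) A (pr0 X A B)"
  by (simp add: additive_def)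
lemma additive_pr1: "A \<in> obj X \<Longrightarrow> B \<in> obj X \<Longrightarrow> additive (prd X A B) B (pr1 X A B)"
  by (simp add: additive_def)
lemma additive_idm: "A \<in> obj X \<Longrightarrow> additive A A (idm X A)"
  by (simp add: additive_def)
lemma additive_cmp: "A \<in> obj X \<Longrightarrow> B \<in> obj X \<Longrightarrow> C \<in> obj X \<Longrightarrow> additive A B h \<Longrightarrow> additive B C k \<Longrightarrow>
  additive A C (cmp X A B C h k)"
  using additive_hom[of A B h] additive_hom[of B C k]
  by (auto simp add: additive_def simp flip: cmp_assoc)
lemma additive_pair: "C \<in> obj X \<Longrightarrow> A \<in> obj X \<Longrightarrow> B \<in> obj X \<Longrightarrow> additive C A f \<Longrightarrow> additive C B g \<Longrightarrow>
  additive C (prd X A B) (pair X C A B f g)"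
  using additive_hom[of C A f] additive_hom[of C B g]
  by (auto simp add: additive_def)
lemma tms_hom[simp]: "P = prd X A B \<Longrightarrow> Q = prd X A' B' \<Longrightarrow> A \<in> obj X \<Longrightarrow> B \<in> obj X \<Longrightarrow> A' \<in> obj X \<Longrightarrow>
  B' \<in> obj X \<Longrightarrow>
  a \<in> hom X A A' \<Longrightarrow> b \<in> hom X B B' \<Longrightarrow> tms X A B A' B' a b \<in> hom X P Q"
  by (simp add: tms_def)
lemma PM_hom[simp]: "P = prd X A A \<Longrightarrow> Q = prd X B B \<Longrightarrow> A \<in> obj X \<Longrightarrow> B \<in> obj X \<Longrightarrow>
  h \<in> hom X A B \<Longrightarrow> PM X A B h \<in> hom X P Q"
  by (simp add: PM_def)
lemma additive_tms: "A \<in> obj X \<Longrightarrow> B \<in> obj X \<Longrightarrow> A' \<in> obj X \<Longrightarrow> B' \<in> obj X \<Longrightarrow> additive A A' a \<Longrightarrow>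
  additive B B' b \<Longrightarrow>
  additive (prd X A B) (prd X A' B') (tms X A B A' B' a b)"
  unfolding tms_def
  by (intro additive_pair additive_cmp additive_pr0 additive_pr1) auto
lemma additive_PM: "A \<in> obj X \<Longrightarrow> B \<in> obj X \<Longrightarrow> additive A B h \<Longrightarrow>
  additive (prd X A A) (prd X B B) (PM X A B h)"
  unfolding PM_def by (rule additive_tms) auto

lemma Pnm_hom[simp]: "P = Pn X n A \<Longrightarrow> Q = Pn X n B \<Longrightarrow> A \<in> obj X \<Longrightarrow> B \<in> obj X \<Longrightarrow>
  h \<in> hom X A B \<Longrightarrow> Pnm X n A B h \<in> hom X P Q"
  by (induct n arbitrary: P Q) auto
lemma additive_Pnm: "A \<in> obj X \<Longrightarrow> B \<in> obj X \<Longrightarrow> additive A B h \<Longrightarrow>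
  additive (Pn X n A) (Pn X n B) (Pnm X n A B h)"
  by (induct n) (auto intro: additive_PM)

lemma tms_cmp: "A \<in> obj X \<Longrightarrow> B \<in> obj X \<Longrightarrow> A' \<in> obj X \<Longrightarrow> B' \<in> obj X \<Longrightarrow> A'' \<in> obj X \<Longrightarrow> B'' \<in> obj X \<Longrightarrow>
  a \<in> hom X A A' \<Longrightarrow> b \<in> hom X B B' \<Longrightarrow> c \<in> hom X A' A'' \<Longrightarrow> d \<in> hom X B' B'' \<Longrightarrow>
  cmp X (prd X A B) (prd X A' B') (prd X A'' B'') (tms X A B A' B' a b) (tms X A' B' A'' B'' c d)
  = tms X A B A'' B'' (cmp X A A' A'' a c) (cmp X B B' B'' b d)"
  by (simp add: tms_def)
lemma PM_cmp: "A \<in> obj X \<Longrightarrow> B \<in> obj X \<Longrightarrow> C \<in> obj X \<Longrightarrow> h \<in> hom X A B \<Longrightarrow> k \<in> hom X B C \<Longrightarrow>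
  PM X A C (cmp X A B C h k)
    = cmp X (prd X A A) (prd X B B) (prd X C C) (PM X A B h) (PM X B C k)"
  by (simp add: PM_def tms_cmp)
lemma PM_id[simp]: "A \<in> obj X \<Longrightarrow> PM X A A (idm X A) = idm X (prd X A A)"
  by (simp add: PM_def tms_def)
lemma Pnm_id[simp]: "A \<in> obj X \<Longrightarrow> Pnm X n A A (idm X A) = idm X (Pn X n A)"
  by (induct n) auto
lemma Pnm_cmp: "A \<in> obj X \<Longrightarrow> B \<in> obj X \<Longrightarrow> C \<in> obj X \<Longrightarrow> h \<in> hom X A B \<Longrightarrow> k \<in> hom X B C \<Longrightarrow>
  Pnm X n A C (cmp X A B C h k)
    = cmp X (Pn X n A) (Pn X n B) (Pn X n C) (Pnm X n A B h) (Pnm X n B C k)"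
  by (induct n) (auto simp: PM_cmp)

end

lemma Pnm_Pnm[simp]: "Pnm X n (Pn X k A) (Pn X k B) (Pnm X k A B h) = Pnm X (n+k) A B h"
  by (induct n) auto

section \<open>Pre-D-sequences\<close>

definition spair :: "('o,'m) clac \<Rightarrow> 'o \<Rightarrow> 'o \<Rightarrow> 'o \<Rightarrow> (nat \<Rightarrow> 'm) \<Rightarrow> (nat \<Rightarrow> 'm) \<Rightarrow> nat \<Rightarrow> 'm" where
  "spair X C A B U V = (\<lambda>n. pair X (Pn X n C) A B (U n) (V n))"
definition sadd :: "('o,'m) clac \<Rightarrow> 'o \<Rightarrow> 'o \<Rightarrow> (nat \<Rightarrow> 'm) \<Rightarrow> (nat \<Rightarrow> 'm) \<Rightarrow> nat \<Rightarrow> 'm" where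
  "sadd X A B U V = (\<lambda>n. add X (Pn X n A) B (U n) (V n))"
definition szro :: "('o,'m) clac \<Rightarrow> 'o \<Rightarrow> 'o \<Rightarrow> nat \<Rightarrow> 'm" where
  "szro X A B = (\<lambda>n. zro X (Pn X n A) B)"
definition spost :: "('o,'m) clac \<Rightarrow> 'o \<Rightarrow> 'o \<Rightarrow> 'o \<Rightarrow> (nat \<Rightarrow> 'm) \<Rightarrow> 'm \<Rightarrow> nat \<Rightarrow> 'm" where
  "spost X A B B' U h = (\<lambda>n. cmp X (Pn X n A) B B' (U n) h)"

lemma Dk_Dk[simp]: "Dk j (Dk k F) = Dk (j+k) F"
  by (simp add: Dk_def add.assoc)
lemma Dk_0[simp]: "Dk 0 F = F" by (simp add: Dk_def)

lemma Tn_Tn[simp]: "Tn X n (Pn X k A) (Pn X k B) (Tn X k A B F) = Tn X (n+k) A B F"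
  by (induct n) auto
lemma Tn_Tseq[simp]: "Tn X n (prd X A A) (prd X B B) (Tseq X A B F) = Tn X (Suc n) A B F"
  using Tn_Tn[of X n 1 A B F] by simp

context cartesian_left_additive begin

lemma pre_dseqD: "pre_dseq X A B F \<Longrightarrow> P = Pn X n A \<Longrightarrow> B' = B \<Longrightarrow> F n \<in> hom X P B'"
  by (simp add: pre_dseq_def)

lemma pre_dseqI: "(\<And>n. F n \<in> hom X (Pn X n A) B) \<Longrightarrow> pre_dseq X A B F"
  by (simp add: pre_dseq_def)

lemma act_hom[simp]: "P = Pn X n A' \<Longrightarrow> B'' = B \<Longrightarrow> A' \<in> obj X \<Longrightarrow> A \<in> obj X \<Longrightarrow> B \<in> obj X \<Longrightarrow>
   h \<in> hom X A' A \<Longrightarrow> pre_dseq X A B F \<Longrightarrow> act X A' A B h F n \<in> hom X P B''"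
  by (simp add: act_def pre_dseqD[of A B F])
lemma spair_hom[simp]: "P = Pn X n C \<Longrightarrow> Q = prd X A B \<Longrightarrow> C \<in> obj X \<Longrightarrow> A \<in> obj X \<Longrightarrow> B \<in> obj X \<Longrightarrow>
   pre_dseq X C A U \<Longrightarrow> pre_dseq X C B V \<Longrightarrow> spair X C A B U V n \<in> hom X P Q"
  by (simp add: spair_def pre_dseqD[of C A U] pre_dseqD[of C B V])
lemma sadd_hom[simp]: "P = Pn X n A \<Longrightarrow> B' = B \<Longrightarrow> A \<in> obj X \<Longrightarrow> B \<in> obj X \<Longrightarrow>
   pre_dseq X A B U \<Longrightarrow> pre_dseq X A B V \<Longrightarrow> sadd X A B U V n \<in> hom X P B'"
  by (simp add: sadd_def pre_dseqD[of A B U] pre_dseqD[of A B V])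
lemma szro_hom[simp]: "P = Pn X n A \<Longrightarrow> B' = B \<Longrightarrow> A \<in> obj X \<Longrightarrow> B \<in> obj X \<Longrightarrow>
   szro X A B n \<in> hom X P B'"
  by (simp add: szro_def)
lemma spost_hom[simp]: "P = Pn X n A \<Longrightarrow> B'' = B' \<Longrightarrow> A \<in> obj X \<Longrightarrow> B \<in> obj X \<Longrightarrow> B' \<in> obj X \<Longrightarrow>
   pre_dseq X A B U \<Longrightarrow> h \<in> hom X B B' \<Longrightarrow> spost X A B B' U h n \<in> hom X P B''"
  by (simp add: spost_def pre_dseqD[of A B U])
lemma Tseq_hom[simp]: "P = Pn X n (prd X A A) \<Longrightarrow> Q = prd X B B \<Longrightarrow> A \<in> obj X \<Longrightarrow> B \<in> obj X \<Longrightarrow>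
   pre_dseq X A B U \<Longrightarrow> Tseq X A B U n \<in> hom X P Q"
  by (simp add: Tseq_def pre_dseqD[of A B U])
lemma Tn_hom[simp]: "P = Pn X n (Pn X k A) \<Longrightarrow> Q = Pn X k B \<Longrightarrow> A \<in> obj X \<Longrightarrow> B \<in> obj X \<Longrightarrow>
   pre_dseq X A B U \<Longrightarrow> Tn X k A B U n \<in> hom X P Q"
proof (induct k arbitrary: n P Q)
  case 0 then show ?case by (simp add: pre_dseqD[of A B U])
next
  case (Suc k)
  have "pre_dseq X (Pn X k A) (Pn X k B) (Tn X k A B U)"
    by (rule pre_dseqI) (use Suc in simp)
  then show ?case using Suc by simp
qed
lemma dcomp_hom[simp]: "P = Pn X n A \<Longrightarrow> C' = C \<Longrightarrow> A \<in> obj X \<Longrightarrow> B \<in> obj X \<Longrightarrow> C \<in> obj X \<Longrightarrow>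
   pre_dseq X A B U \<Longrightarrow> pre_dseq X B C V \<Longrightarrow> dcomp X A B C U V n \<in> hom X P C'"
  by (simp add: dcomp_def pre_dseqD[of B C V])
lemma iseq_hom[simp]: "A' = Pn X n A \<Longrightarrow> A'' = A \<Longrightarrow> A \<in> obj X \<Longrightarrow> iseq X A n \<in> hom X A' A''"
  by (induct n arbitrary: A') auto
lemma Dk_hom[simp]: "P = Pn X n (Pn X k A) \<Longrightarrow> B' = B \<Longrightarrow> pre_dseq X A B U \<Longrightarrow> Dk k U n \<in> hom X P B'"
  by (simp add: pre_dseqD[of A B U] Dk_def)

lemma pre_dseq_act[simp]: "A'' = A' \<Longrightarrow> B'' = B \<Longrightarrow> A' \<in> obj X \<Longrightarrow> A \<in> obj X \<Longrightarrow> B \<in> obj X \<Longrightarrow>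
   h \<in> hom X A' A \<Longrightarrow> pre_dseq X A B F \<Longrightarrow> pre_dseq X A'' B'' (act X A' A B h F)"
  by (rule pre_dseqI) simp
lemma pre_dseq_spair[simp]: "C' = C \<Longrightarrow> P = prd X A B \<Longrightarrow> C \<in> obj X \<Longrightarrow> A \<in> obj X \<Longrightarrow> B \<in> obj X \<Longrightarrow>
   pre_dseq X C A U \<Longrightarrow> pre_dseq X C B V \<Longrightarrow> pre_dseq X C' P (spair X C A B U V)"
  by (rule pre_dseqI) simp
lemma pre_dseq_sadd[simp]: "A' = A \<Longrightarrow> B' = B \<Longrightarrow> A \<in> obj X \<Longrightarrow> B \<in> obj X \<Longrightarrow>
   pre_dseq X A B U \<Longrightarrow> pre_dseq X A B V \<Longrightarrow> pre_dseq X A' B' (sadd X A B U V)"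
  by (rule pre_dseqI) simp
lemma pre_dseq_szro[simp]: "A' = A \<Longrightarrow> B' = B \<Longrightarrow> A \<in> obj X \<Longrightarrow> B \<in> obj X \<Longrightarrow>
   pre_dseq X A' B' (szro X A B)"
  by (rule pre_dseqI) simp
lemma pre_dseq_spost[simp]: "A' = A \<Longrightarrow> B'' = B' \<Longrightarrow> A \<in> obj X \<Longrightarrow> B \<in> obj X \<Longrightarrow> B' \<in> obj X \<Longrightarrow>
   pre_dseq X A B U \<Longrightarrow> h \<in> hom X B B' \<Longrightarrow> pre_dseq X A' B'' (spost X A B B' U h)"
  by (rule pre_dseqI) simp
lemma pre_dseq_Dk[simp]: "A' = Pn X k A \<Longrightarrow> B' = B \<Longrightarrow>
   pre_dseq X A B U \<Longrightarrow> pre_dseq X A' B' (Dk k U)"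
  by (rule pre_dseqI) simp
lemma pre_dseq_Tseq[simp]: "A' = prd X A A \<Longrightarrow> B' = prd X B B \<Longrightarrow> A \<in> obj X \<Longrightarrow> B \<in> obj X \<Longrightarrow>
   pre_dseq X A B U \<Longrightarrow> pre_dseq X A' B' (Tseq X A B U)"
  by (rule pre_dseqI) simp
lemma pre_dseq_Tn[simp]: "A' = Pn X k A \<Longrightarrow> B' = Pn X k B \<Longrightarrow> A \<in> obj X \<Longrightarrow> B \<in> obj X \<Longrightarrow>
   pre_dseq X A B U \<Longrightarrow> pre_dseq X A' B' (Tn X k A B U)"
  by (rule pre_dseqI) simp
lemma pre_dseq_dcomp[simp]: "A' = A \<Longrightarrow> C' = C \<Longrightarrow> A \<in> obj X \<Longrightarrow> B \<in> obj X \<Longrightarrow> C \<in> obj X \<Longrightarrow>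
   pre_dseq X A B U \<Longrightarrow> pre_dseq X B C V \<Longrightarrow> pre_dseq X A' C' (dcomp X A B C U V)"
  by (rule pre_dseqI) simp
lemma pre_dseq_iseq[simp]: "A' = A \<Longrightarrow> A'' = A \<Longrightarrow> A \<in> obj X \<Longrightarrow> pre_dseq X A' A'' (iseq X A)"
  by (rule pre_dseqI) simp

lemma act_act: "A0 \<in> obj X \<Longrightarrow> A1 \<in> obj X \<Longrightarrow> A2 \<in> obj X \<Longrightarrow> B \<in> obj X \<Longrightarrow> h \<in> hom X A0 A1 \<Longrightarrow>
  h' \<in> hom X A1 A2 \<Longrightarrow>
  pre_dseq X A2 B F \<Longrightarrow>
  act X A0 A1 B h (act X A1 A2 B h' F) = act X A0 A2 B (cmp X A0 A1 A2 h h') F"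
  by (rule ext) (simp add: act_def Pnm_cmp pre_dseqD[of A2 B F])
lemma act_id[simp]: "A \<in> obj X \<Longrightarrow> B \<in> obj X \<Longrightarrow> pre_dseq X A B F \<Longrightarrow> act X A A B (idm X A) F = F"
  by (rule ext) (simp add: act_def pre_dseqD[of A B F])
lemma act_spair[simp]: "A' \<in> obj X \<Longrightarrow> A \<in> obj X \<Longrightarrow> B1 \<in> obj X \<Longrightarrow> B2 \<in> obj X \<Longrightarrow> h \<in> hom X A' A \<Longrightarrow>
  pre_dseq X A B1 U \<Longrightarrow> pre_dseq X A B2 V \<Longrightarrow>
  act X A' A (prd X B1 B2) h (spair X A B1 B2 U V)
    = spair X A' B1 B2 (act X A' A B1 h U) (act X A' A B2 h V)"
  by (rule ext) (simp add: act_def spair_def pre_dseqD[of A B1 U] pre_dseqD[of A B2 V])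
lemma act_sadd[simp]: "A' \<in> obj X \<Longrightarrow> A \<in> obj X \<Longrightarrow> B \<in> obj X \<Longrightarrow> h \<in> hom X A' A \<Longrightarrow>
  pre_dseq X A B U \<Longrightarrow> pre_dseq X A B V \<Longrightarrow>
  act X A' A B h (sadd X A B U V) = sadd X A' B (act X A' A B h U) (act X A' A B h V)"
  by (rule ext) (simp add: act_def sadd_def pre_dseqD[of A B U] pre_dseqD[of A B V])
lemma act_szro[simp]: "A' \<in> obj X \<Longrightarrow> A \<in> obj X \<Longrightarrow> B \<in> obj X \<Longrightarrow> h \<in> hom X A' A \<Longrightarrow>
  act X A' A B h (szro X A B) = szro X A' B"
  by (rule ext) (simp add: act_def szro_def)
lemma act_spost[simp]: "A' \<in> obj X \<Longrightarrow> A \<in> obj X \<Longrightarrow> B \<in> obj X \<Longrightarrow> B' \<in> obj X \<Longrightarrow> h \<in> hom X A' A \<Longrightarrow>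
  pre_dseq X A B U \<Longrightarrow> k \<in> hom X B B' \<Longrightarrow>
  act X A' A B' h (spost X A B B' U k) = spost X A' B B' (act X A' A B h U) k"
  by (rule ext) (simp add: act_def spost_def pre_dseqD[of A B U])
lemma spost_spost[simp]: "A \<in> obj X \<Longrightarrow> B \<in> obj X \<Longrightarrow> B' \<in> obj X \<Longrightarrow> B'' \<in> obj X \<Longrightarrow>
  pre_dseq X A B U \<Longrightarrow> h \<in> hom X B B' \<Longrightarrow> k \<in> hom X B' B'' \<Longrightarrow>
  spost X A B' B'' (spost X A B B' U h) k = spost X A B B'' U (cmp X B B' B'' h k)"
  by (rule ext) (simp add: spost_def pre_dseqD[of A B U])
lemma spost_id[simp]: "A \<in> obj X \<Longrightarrow> B \<in> obj X \<Longrightarrow> pre_dseq X A B U \<Longrightarrow> spost X A B B U (idm X B) = U"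
  by (rule ext) (simp add: spost_def pre_dseqD[of A B U])
lemma spost_pair[simp]: "A \<in> obj X \<Longrightarrow> C \<in> obj X \<Longrightarrow> B1 \<in> obj X \<Longrightarrow> B2 \<in> obj X \<Longrightarrow>
  pre_dseq X A C U \<Longrightarrow> a \<in> hom X C B1 \<Longrightarrow> b \<in> hom X C B2 \<Longrightarrow>
  spost X A C (prd X B1 B2) U (pair X C B1 B2 a b)
    = spair X A B1 B2 (spost X A C B1 U a) (spost X A C B2 U b)"
  by (rule ext) (simp add: spost_def spair_def pre_dseqD[of A C U])
lemma spost_spair_pr0[simp]: "A \<in> obj X \<Longrightarrow> B1 \<in> obj X \<Longrightarrow> B2 \<in> obj X \<Longrightarrow>
  pre_dseq X A B1 U \<Longrightarrow> pre_dseq X A B2 V \<Longrightarrow>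
  spost X A (prd X B1 B2) B1 (spair X A B1 B2 U V) (pr0 X B1 B2) = U"
  by (rule ext) (simp add: spost_def spair_def pre_dseqD[of A B1 U] pre_dseqD[of A B2 V])
lemma spost_spair_pr1[simp]: "A \<in> obj X \<Longrightarrow> B1 \<in> obj X \<Longrightarrow> B2 \<in> obj X \<Longrightarrow>
  pre_dseq X A B1 U \<Longrightarrow> pre_dseq X A B2 V \<Longrightarrow>
  spost X A (prd X B1 B2) B2 (spair X A B1 B2 U V) (pr1 X B1 B2) = V"
  by (rule ext) (simp add: spost_def spair_def pre_dseqD[of A B1 U] pre_dseqD[of A B2 V])
lemma spost_spair_pr0'[simp]: "A \<in> obj X \<Longrightarrow> B1 \<in> obj X \<Longrightarrow> B2 \<in> obj X \<Longrightarrow> D \<in> obj X \<Longrightarrow>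
  pre_dseq X A B1 U \<Longrightarrow> pre_dseq X A B2 V \<Longrightarrow> k \<in> hom X B1 D \<Longrightarrow>
  spost X A (prd X B1 B2) D (spair X A B1 B2 U V) (cmp X (prd X B1 B2) B1 D (pr0 X B1 B2) k)
    = spost X A B1 D U k"
  by (rule ext) (simp add: spost_def spair_def pre_dseqD[of A B1 U] pre_dseqD[of A B2 V])
lemma spost_spair_pr1'[simp]: "A \<in> obj X \<Longrightarrow> B1 \<in> obj X \<Longrightarrow> B2 \<in> obj X \<Longrightarrow> D \<in> obj X \<Longrightarrow>
  pre_dseq X A B1 U \<Longrightarrow> pre_dseq X A B2 V \<Longrightarrow> k \<in> hom X B2 D \<Longrightarrow>
  spost X A (prd X B1 B2) D (spair X A B1 B2 U V) (cmp X (prd X B1 B2) B2 D (pr1 X B1 B2) k)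
    = spost X A B2 D V k"
  by (rule ext) (simp add: spost_def spair_def pre_dseqD[of A B1 U] pre_dseqD[of A B2 V])
lemma spair_spost_eta[simp]: "A \<in> obj X \<Longrightarrow> B1 \<in> obj X \<Longrightarrow> B2 \<in> obj X \<Longrightarrow>
  pre_dseq X A (prd X B1 B2) H \<Longrightarrow>
  spair X A B1 B2 (spost X A (prd X B1 B2) B1 H (pr0 X B1 B2)) (spost X A (prd X B1 B2) B2 H (pr1 X B1 B2))
    = H"
  by (rule ext) (simp add: spair_def spost_def pre_dseqD[of A "prd X B1 B2" H])
lemma spost_add[simp]: "A \<in> obj X \<Longrightarrow> B \<in> obj X \<Longrightarrow> B' \<in> obj X \<Longrightarrow>
  pre_dseq X A B U \<Longrightarrow> a \<in> hom X B B' \<Longrightarrow> b \<in> hom X B B' \<Longrightarrow>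
  spost X A B B' U (add X B B' a b) = sadd X A B' (spost X A B B' U a) (spost X A B B' U b)"
  by (rule ext) (simp add: spost_def sadd_def pre_dseqD[of A B U])
lemma spost_zro[simp]: "A \<in> obj X \<Longrightarrow> B \<in> obj X \<Longrightarrow> B' \<in> obj X \<Longrightarrow>
  pre_dseq X A B U \<Longrightarrow> spost X A B B' U (zro X B B') = szro X A B'"
  by (rule ext) (simp add: spost_def szro_def pre_dseqD[of A B U])
lemma spost_sadd: "A \<in> obj X \<Longrightarrow> B \<in> obj X \<Longrightarrow> B' \<in> obj X \<Longrightarrow> additive B B' h \<Longrightarrow>
  pre_dseq X A B U \<Longrightarrow> pre_dseq X A B V \<Longrightarrow>
  spost X A B B' (sadd X A B U V) h = sadd X A B' (spost X A B B' U h) (spost X A B B' V h)"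
  by (rule ext) (simp add: spost_def sadd_def pre_dseqD[of A B U] pre_dseqD[of A B V] additive_add)
lemma spost_szro: "A \<in> obj X \<Longrightarrow> B \<in> obj X \<Longrightarrow> B' \<in> obj X \<Longrightarrow> additive B B' h \<Longrightarrow>
  spost X A B B' (szro X A B) h = szro X A B'"
  by (rule ext) (simp add: spost_def szro_def additive_zro)
lemma spair_szro[simp]: "A \<in> obj X \<Longrightarrow> B1 \<in> obj X \<Longrightarrow> B2 \<in> obj X \<Longrightarrow>
  spair X A B1 B2 (szro X A B1) (szro X A B2) = szro X A (prd X B1 B2)"
  by (rule ext) (simp add: spair_def szro_def)
lemma sadd_spair[simp]: "A \<in> obj X \<Longrightarrow> B1 \<in> obj X \<Longrightarrow> B2 \<in> obj X \<Longrightarrow>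
  pre_dseq X A B1 U \<Longrightarrow> pre_dseq X A B2 V \<Longrightarrow> pre_dseq X A B1 U' \<Longrightarrow> pre_dseq X A B2 V' \<Longrightarrow>
  sadd X A (prd X B1 B2) (spair X A B1 B2 U V) (spair X A B1 B2 U' V')
    = spair X A B1 B2 (sadd X A B1 U U') (sadd X A B2 V V')"
  by (rule ext) (simp add: spair_def sadd_def pre_dseqD[of A B1 U] pre_dseqD[of A B2 V] pre_dseqD[of A B1 U'] pre_dseqD[of A B2 V'])

lemma Dk_act[simp]: "A' \<in> obj X \<Longrightarrow> A \<in> obj X \<Longrightarrow> B \<in> obj X \<Longrightarrow> h \<in> hom X A' A \<Longrightarrow>
  Dk k (act X A' A B h F) = act X (Pn X k A') (Pn X k A) B (Pnm X k A' A h) (Dk k F)"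
  by (rule ext) (simp add: act_def Dk_def)
lemma Dk_spair[simp]: "Dk k (spair X C A B U V) = spair X (Pn X k C) A B (Dk k U) (Dk k V)"
  by (rule ext) (simp add: spair_def Dk_def)
lemma Dk_sadd[simp]: "Dk k (sadd X A B U V) = sadd X (Pn X k A) B (Dk k U) (Dk k V)"
  by (rule ext) (simp add: sadd_def Dk_def)
lemma Dk_szro[simp]: "Dk k (szro X A B) = szro X (Pn X k A) B"
  by (rule ext) (simp add: szro_def Dk_def)
lemma Dk_spost[simp]: "Dk k (spost X A B B' U h) = spost X (Pn X k A) B B' (Dk k U) h"
  by (rule ext) (simp add: spost_def Dk_def)
lemma Dk_dcomp: "Dk k (dcomp X A B C F G)
  = dcomp X (Pn X k A) (Pn X k B) C (Tn X k A B F) (Dk k G)"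
  by (rule ext) (simp add: dcomp_def Dk_def)

lemma Tseq_eq_spair: "A \<in> obj X \<Longrightarrow> B \<in> obj X \<Longrightarrow>
  Tseq X A B F = spair X (prd X A A) B B (act X (prd X A A) A B (pr0 X A A) F) (Dk 1 F)"
  by (rule ext) (simp add: Tseq_def spair_def act_def Dk_def)

lemma PM_pr0[simp]: "A \<in> obj X \<Longrightarrow> B \<in> obj X \<Longrightarrow> h \<in> hom X A B \<Longrightarrow>
  cmp X (prd X A A) (prd X B B) B (PM X A B h) (pr0 X B B) = cmp X (prd X A A) A B (pr0 X A A) h"
  by (simp add: PM_def tms_def)
lemma PM_pr1'[simp]: "A \<in> obj X \<Longrightarrow> B \<in> obj X \<Longrightarrow> D \<in> obj X \<Longrightarrow> h \<in> hom X A B \<Longrightarrow> k \<in> hom X B D \<Longrightarrow>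
  cmp X (prd X A A) (prd X B B) D (PM X A B h) (cmp X (prd X B B) B D (pr1 X B B) k)
    = cmp X (prd X A A) A D (pr1 X A A) (cmp X A B D h k)"
  by (simp add: PM_def tms_def)

lemma Tseq_act[simp]: "A' \<in> obj X \<Longrightarrow> A \<in> obj X \<Longrightarrow> B \<in> obj X \<Longrightarrow> h \<in> hom X A' A \<Longrightarrow> pre_dseq X A B F \<Longrightarrow>
  Tseq X A' B (act X A' A B h F)
    = act X (prd X A' A') (prd X A A) (prd X B B) (PM X A' A h) (Tseq X A B F)"
  by (simp add: Tseq_eq_spair act_act)
lemma Tn_act: "A' \<in> obj X \<Longrightarrow> A \<in> obj X \<Longrightarrow> B \<in> obj X \<Longrightarrow> h \<in> hom X A' A \<Longrightarrow> pre_dseq X A B F \<Longrightarrow>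
  Tn X n A' B (act X A' A B h F)
    = act X (Pn X n A') (Pn X n A) (Pn X n B) (Pnm X n A' A h) (Tn X n A B F)"
  by (induct n) simp_all
lemma act_dcomp: "A' \<in> obj X \<Longrightarrow> A \<in> obj X \<Longrightarrow> B \<in> obj X \<Longrightarrow> C \<in> obj X \<Longrightarrow> h \<in> hom X A' A \<Longrightarrow>
  pre_dseq X A B F \<Longrightarrow> pre_dseq X B C G \<Longrightarrow>
  act X A' A C h (dcomp X A B C F G) = dcomp X A' B C (act X A' A B h F) G"
  by (rule ext) (simp add: dcomp_def Tn_act act_def[of X "Pn X _ A'"] pre_dseqD[of B C G],
      simp add: act_def pre_dseqD[of B C G])
lemma Tseq_spost[simp]: "A \<in> obj X \<Longrightarrow> B \<in> obj X \<Longrightarrow> B' \<in> obj X \<Longrightarrow> h \<in> hom X B B' \<Longrightarrow> pre_dseq X A B F \<Longrightarrow>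
  Tseq X A B' (spost X A B B' F h)
    = spost X (prd X A A) (prd X B B) (prd X B' B') (Tseq X A B F) (PM X B B' h)"
  by (simp add: Tseq_eq_spair PM_def tms_def)
lemma Tn_spost: "A \<in> obj X \<Longrightarrow> B \<in> obj X \<Longrightarrow> B' \<in> obj X \<Longrightarrow> h \<in> hom X B B' \<Longrightarrow> pre_dseq X A B F \<Longrightarrow>
  Tn X n A B' (spost X A B B' F h)
    = spost X (Pn X n A) (Pn X n B) (Pn X n B') (Tn X n A B F) (Pnm X n B B' h)"
  by (induct n) simp_all
lemma dcomp_spost: "A \<in> obj X \<Longrightarrow> B \<in> obj X \<Longrightarrow> B' \<in> obj X \<Longrightarrow> C \<in> obj X \<Longrightarrow> h \<in> hom X B B' \<Longrightarrow>
  pre_dseq X A B F \<Longrightarrow> pre_dseq X B' C G \<Longrightarrow>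
  dcomp X A B' C (spost X A B B' F h) G = dcomp X A B C F (act X B B' C h G)"
  by (rule ext) (simp add: dcomp_def Tn_spost, simp add: spost_def act_def pre_dseqD[of B' C G])
lemma dcomp_sadd[simp]: "A \<in> obj X \<Longrightarrow> B \<in> obj X \<Longrightarrow> C \<in> obj X \<Longrightarrow>
  pre_dseq X A B F \<Longrightarrow> pre_dseq X B C G \<Longrightarrow> pre_dseq X B C H \<Longrightarrow>
  dcomp X A B C F (sadd X B C G H) = sadd X A C (dcomp X A B C F G) (dcomp X A B C F H)"
  by (rule ext) (simp add: dcomp_def sadd_def pre_dseqD[of B C G] pre_dseqD[of B C H])
lemma dcomp_szro[simp]: "A \<in> obj X \<Longrightarrow> B \<in> obj X \<Longrightarrow> C \<in> obj X \<Longrightarrow>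
  pre_dseq X A B F \<Longrightarrow> dcomp X A B C F (szro X B C) = szro X A C"
  by (rule ext) (simp add: dcomp_def szro_def)

text \<open>\<open>T\<^sup>k\<close> commutes with the projections \<open>P\<^sup>k(\<pi>\<^sub>0)\<close>; this is what makes \<open>T\<close> a functor
  on pre-D-sequences (\<open>Tseq_dcomp\<close>).\<close>

lemma Tn_Suc_pr0: "A \<in> obj X \<Longrightarrow> B \<in> obj X \<Longrightarrow> pre_dseq X A B F \<Longrightarrow>
  spost X (Pn X (Suc k) A) (Pn X (Suc k) B) (Pn X k B) (Tn X (Suc k) A B F) (Pnm X k (prd X B B) B (pr0 X B B))
  = act X (Pn X (Suc k) A) (Pn X k A) (Pn X k B) (Pnm X k (prd X A A) A (pr0 X A A)) (Tn X k A B F)"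
proof (induct k)
  case 0
  then show ?case by (simp add: Tseq_eq_spair)
next
  case (Suc k)
  let ?pA = "Pnm X k (prd X A A) A (pr0 X A A)" and ?pB = "Pnm X k (prd X B B) B (pr0 X B B)"
  have "spost X (Pn X (Suc (Suc k)) A) (Pn X (Suc (Suc k)) B) (Pn X (Suc k) B) (Tn X (Suc (Suc k)) A B F) (Pnm X (Suc k) (prd X B B) B (pr0 X B B))
    = Tseq X (Pn X (Suc k) A) (Pn X k B) (spost X (Pn X (Suc k) A) (Pn X (Suc k) B) (Pn X k B) (Tn X (Suc k) A B F) ?pB)"
    using Suc.prems by (subst Tseq_spost) simp_all
  also have "\<dots> = Tseq X (Pn X (Suc k) A) (Pn X k B) (act X (Pn X (Suc k) A) (Pn X k A) (Pn X k B) ?pA (Tn X k A B F))"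
    using Suc by simp
  also have "\<dots> = act X (Pn X (Suc (Suc k)) A) (Pn X (Suc k) A) (Pn X (Suc k) B) (Pnm X (Suc k) (prd X A A) A (pr0 X A A)) (Tn X (Suc k) A B F)"
    using Suc.prems by (subst Tseq_act) simp_all
  finally show ?case .
qed

lemma Tseq_dcomp:
  assumes A: "A \<in> obj X" and B: "B \<in> obj X" and C: "C \<in> obj X"
    and F: "pre_dseq X A B F" and G: "pre_dseq X B C G"
  shows "Tseq X A C (dcomp X A B C F G)
    = dcomp X (prd X A A) (prd X B B) (prd X C C) (Tseq X A B F) (Tseq X B C G)"
proof (rule ext)
  fix n
  have T_pr0: "cmp X (Pn X (Suc n) A) (Pn X (Suc n) B) (Pn X n B) (Tn X (Suc n) A B F 0) (Pnm X n (prd X B B) B (pr0 X B B))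
     = cmp X (Pn X (Suc n) A) (Pn X n A) (Pn X n B) (Pnm X n (prd X A A) A (pr0 X A A)) (Tn X n A B F 0)"
    using fun_cong[OF Tn_Suc_pr0[OF A B F, of n], of 0] A B F by (simp add: spost_def act_def)
  have T_pr0_G: "cmp X (Pn X (Suc n) A) (Pn X (Suc n) B) C (Tn X (Suc n) A B F 0) (cmp X (Pn X (Suc n) B) (Pn X n B) C (Pnm X n (prd X B B) B (pr0 X B B)) (G n))
     = cmp X (Pn X (Suc n) A) (Pn X n A) C (Pnm X n (prd X A A) A (pr0 X A A)) (cmp X (Pn X n A) (Pn X n B) C (Tn X n A B F 0) (G n))"
    using T_pr0 A B C F G
    by (simp add: pre_dseqD[of B C G] flip: cmp_assoc)
  show "Tseq X A C (dcomp X A B C F G) n = dcomp X (prd X A A) (prd X B B) (prd X C C) (Tseq X A B F) (Tseq X B C G) n"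
    using A B C F G T_pr0_G
    by (simp add: Tseq_def[of X A C] Tseq_def[of X B C] dcomp_def pre_dseqD[of B C G] del: Tn.simps)
qed

lemma Tn_dcomp: "A \<in> obj X \<Longrightarrow> B \<in> obj X \<Longrightarrow> C \<in> obj X \<Longrightarrow> pre_dseq X A B F \<Longrightarrow> pre_dseq X B C G \<Longrightarrow>
  Tn X n A C (dcomp X A B C F G)
    = dcomp X (Pn X n A) (Pn X n B) (Pn X n C) (Tn X n A B F) (Tn X n B C G)"
  by (induct n) (simp_all add: Tseq_dcomp)

lemma dcomp_assoc: "A \<in> obj X \<Longrightarrow> B \<in> obj X \<Longrightarrow> C \<in> obj X \<Longrightarrow> D \<in> obj X \<Longrightarrow>
  pre_dseq X A B F \<Longrightarrow> pre_dseq X B C G \<Longrightarrow> pre_dseq X C D H \<Longrightarrow>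
  dcomp X A C D (dcomp X A B C F G) H = dcomp X A B D F (dcomp X B C D G H)"
  by (rule ext) (simp add: dcomp_def[of X A C D] dcomp_def[of X A B D] Tn_dcomp pre_dseqD[of C D H],
     simp add: dcomp_def pre_dseqD[of C D H])

lemma Pnm_iseq: "A' \<in> obj X \<Longrightarrow> A \<in> obj X \<Longrightarrow> h \<in> hom X A' A \<Longrightarrow>
  cmp X (Pn X n A') (Pn X n A) A (Pnm X n A' A h) (iseq X A n)
    = cmp X (Pn X n A') A' A (iseq X A' n) h"
  by (induct n) simp_all
lemma act_iseq[simp]: "A' \<in> obj X \<Longrightarrow> A \<in> obj X \<Longrightarrow> h \<in> hom X A' A \<Longrightarrow>
  act X A' A A h (iseq X A) = spost X A' A' A (iseq X A') h"
  by (rule ext) (simp add: act_def spost_def Pnm_iseq)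
lemma iseq_Suc_prd: "A \<in> obj X \<Longrightarrow>
  iseq X A (Suc n) = cmp X (Pn X n (prd X A A)) (prd X A A) A (iseq X (prd X A A) n) (pr1 X A A)"
proof (induct n)
  case 0 then show ?case by simp
next
  case (Suc n)
  have "iseq X A (Suc (Suc n)) = cmp X (Pn X (Suc (Suc n)) A) (Pn X (Suc n) A) A (pr1 X (Pn X (Suc n) A) (Pn X (Suc n) A)) (iseq X A (Suc n))"
    by simp
  also have "\<dots> = cmp X (Pn X (Suc n) (prd X A A)) (prd X A A) A (iseq X (prd X A A) (Suc n)) (pr1 X A A)"
    using Suc by (simp del: iseq.simps(2) add: iseq.simps(2)[of X "prd X A A"])
  finally show ?case .
qed
lemma Dk_1_iseq: "A \<in> obj X \<Longrightarrow>
  Dk (Suc 0) (iseq X A) = spost X (prd X A A) (prd X A A) A (iseq X (prd X A A)) (pr1 X A A)"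
  by (rule ext) (simp add: Dk_def spost_def iseq_Suc_prd del: iseq.simps)
lemma Dk_iseq: "A \<in> obj X \<Longrightarrow>
  Dk k (iseq X A) = spost X (Pn X k A) (Pn X k A) A (iseq X (Pn X k A)) (iseq X A k)"
proof (induct k)
  case 0 then show ?case by simp
next
  case (Suc k)
  have "Dk (Suc k) (iseq X A) = Dk 1 (Dk k (iseq X A))" by simp
  also have "\<dots> = spost X (Pn X (Suc k) A) (Pn X (Suc k) A) A (iseq X (Pn X (Suc k) A)) (iseq X A (Suc k))"
    using Suc by (simp add: Dk_1_iseq del: iseq.simps(2)) simp
  finally show ?case .
qed
lemma Tseq_iseq[simp]:
  assumes A: "A \<in> obj X"
  shows "Tseq X A A (iseq X A) = iseq X (prd X A A)"
proof -
  have "Tseq X A A (iseq X A) = spair X (prd X A A) A A (spost X (prd X A A) (prd X A A) A (iseq X (prd X A A)) (pr0 X A A))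
      (spost X (prd X A A) (prd X A A) A (iseq X (prd X A A)) (pr1 X A A))"
    using A by (simp add: Tseq_eq_spair Dk_1_iseq)
  also have "\<dots> = spost X (prd X A A) (prd X A A) (prd X A A) (iseq X (prd X A A)) (pair X (prd X A A) A A (pr0 X A A) (pr1 X A A))"
    using A by (subst spost_pair) simp_all
  also have "\<dots> = iseq X (prd X A A)" using A by simp
  finally show ?thesis .
qed
lemma Tn_iseq[simp]: "A \<in> obj X \<Longrightarrow> Tn X n A A (iseq X A) = iseq X (Pn X n A)"
  by (induct n) simp_all
lemma dcomp_iseq_left: "A \<in> obj X \<Longrightarrow> B \<in> obj X \<Longrightarrow> pre_dseq X A B F \<Longrightarrow> dcomp X A A B (iseq X A) F = F"
  by (rule ext) (simp add: dcomp_def pre_dseqD[of A B F])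
lemma spost_Tn_iseq: "A \<in> obj X \<Longrightarrow> B \<in> obj X \<Longrightarrow> pre_dseq X A B F \<Longrightarrow>
  spost X (Pn X k A) (Pn X k B) B (Tn X k A B F) (iseq X B k) = Dk k F"
proof (induct k)
  case 0 then show ?case by simp
next
  case (Suc k)
  have "spost X (Pn X (Suc k) A) (Pn X (Suc k) B) B (Tn X (Suc k) A B F) (iseq X B (Suc k))
     = spost X (Pn X (Suc k) A) (Pn X k B) B (spost X (Pn X (Suc k) A) (Pn X (Suc k) B) (Pn X k B) (Tn X (Suc k) A B F) (pr1 X (Pn X k B) (Pn X k B))) (iseq X B k)"
    using Suc.prems by simp
  also have "\<dots> = spost X (Pn X (Suc k) A) (Pn X k B) B (Dk 1 (Tn X k A B F)) (iseq X B k)"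
    using Suc.prems by (simp add: Tseq_eq_spair)
  also have "\<dots> = Dk 1 (spost X (Pn X k A) (Pn X k B) B (Tn X k A B F) (iseq X B k))"
    by simp
  also have "\<dots> = Dk 1 (Dk k F)" using Suc by simp
  finally show ?case by simp
qed
lemma dcomp_iseq_right: "A \<in> obj X \<Longrightarrow> B \<in> obj X \<Longrightarrow> pre_dseq X A B F \<Longrightarrow>
  dcomp X A B B F (iseq X B) = F"
  by (rule ext) (simp add: dcomp_def fun_cong[OF spost_Tn_iseq, of A B F _ 0, simplified spost_def Dk_def, simplified])

lemma sadd_interchange: "A \<in> obj X \<Longrightarrow> B \<in> obj X \<Longrightarrow> pre_dseq X A B a \<Longrightarrow> pre_dseq X A B b \<Longrightarrow>
  pre_dseq X A B c \<Longrightarrow> pre_dseq X A B d \<Longrightarrow>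
  sadd X A B (sadd X A B a b) (sadd X A B c d) = sadd X A B (sadd X A B a c) (sadd X A B b d)"
  by (rule ext) (simp add: sadd_def add_interchange pre_dseqD[of A B a] pre_dseqD[of A B b] pre_dseqD[of A B c] pre_dseqD[of A B d])

lemma sadd_szro_r[simp]: "A \<in> obj X \<Longrightarrow> B \<in> obj X \<Longrightarrow> pre_dseq X A B U \<Longrightarrow>
  sadd X A B U (szro X A B) = U"
  by (rule ext) (simp add: sadd_def szro_def pre_dseqD[of A B U])

lemma sadd_assoc: "A \<in> obj X \<Longrightarrow> B \<in> obj X \<Longrightarrow> pre_dseq X A B f \<Longrightarrow> pre_dseq X A B g \<Longrightarrow>
  pre_dseq X A B h \<Longrightarrow>
  sadd X A B (sadd X A B f g) h = sadd X A B f (sadd X A B g h)"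
  by (rule ext) (simp add: sadd_def add_assoc pre_dseqD[of A B f] pre_dseqD[of A B g] pre_dseqD[of A B h])
lemma sadd_comm: "A \<in> obj X \<Longrightarrow> B \<in> obj X \<Longrightarrow> pre_dseq X A B f \<Longrightarrow> pre_dseq X A B g \<Longrightarrow>
  sadd X A B f g = sadd X A B g f"
  by (rule ext) (simp add: sadd_def add_comm pre_dseqD[of A B f] pre_dseqD[of A B g])
lemma dcomp_iseq_spost:
  assumes obj: "A \<in> obj X" "B \<in> obj X" "B' \<in> obj X"
    and F: "pre_dseq X A B F" and h: "h \<in> hom X B B'"
  shows "dcomp X A B B' F (spost X B B B' (iseq X B) h) = spost X A B B' F h"
proof (rule ext)
  fix n
  have T_iseq: "cmp X (Pn X n A) (Pn X n B) B (Tn X n A B F 0) (iseq X B n) = F n"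
    using fun_cong[OF spost_Tn_iseq[OF obj(1,2) F, of n], of 0] by (simp add: spost_def Dk_def)
  have "cmp X (Pn X n A) (Pn X n B) B' (Tn X n A B F 0) (cmp X (Pn X n B) B B' (iseq X B n) h) = cmp X (Pn X n A) B B' (F n) h"
    using obj F h by (simp add: pre_dseqD[of A B F] flip: cmp_assoc T_iseq)
  then show "dcomp X A B B' F (spost X B B B' (iseq X B) h) n = spost X A B B' F h n"
    by (simp add: dcomp_def spost_def)
qed
lemma pre_dseq_terminal_eq:
  "C \<in> obj X \<Longrightarrow> pre_dseq X C (trm X) F \<Longrightarrow> pre_dseq X C (trm X) G \<Longrightarrow> F = G"
  by (rule ext) (metis bng_uniq Pn_obj pre_dseqD)

end

section \<open>The D-sequence axioms\<close>

definition inj0 :: "('o,'m) clac \<Rightarrow> 'o \<Rightarrow> 'm" where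
  "inj0 X C = pair X C C C (idm X C) (zro X C C)"
definition inj1 :: "('o,'m) clac \<Rightarrow> 'o \<Rightarrow> 'm" where
  "inj1 X C = pair X C C C (zro X C C) (idm X C)"
definition sum_map :: "('o,'m) clac \<Rightarrow> 'o \<Rightarrow> 'm" where
  "sum_map X C = add X (prd X C C) C (pr0 X C C) (pr1 X C C)"
definition id_tms :: "('o,'m) clac \<Rightarrow> 'o \<Rightarrow> 'm \<Rightarrow> 'm" where
  "id_tms X C k = tms X C (prd X C C) C C (idm X C) k"
definition lift_map :: "('o,'m) clac \<Rightarrow> 'o \<Rightarrow> 'm" where
  "lift_map X C = tms X C C (prd X C C) (prd X C C) (inj0 X C) (inj1 X C)"
definition interchange :: "('o,'m) clac \<Rightarrow> 'o \<Rightarrow> 'm" where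
  "interchange X C = pair X (prd X (prd X C C) (prd X C C)) (prd X C C) (prd X C C)
      (pair X (prd X (prd X C C) (prd X C C)) C C
         (cmp X (prd X (prd X C C) (prd X C C)) (prd X C C) C (pr0 X (prd X C C) (prd X C C)) (pr0 X C C))
         (cmp X (prd X (prd X C C) (prd X C C)) (prd X C C) C (pr1 X (prd X C C) (prd X C C)) (pr0 X C C)))
      (pair X (prd X (prd X C C) (prd X C C)) C C
         (cmp X (prd X (prd X C C) (prd X C C)) (prd X C C) C (pr0 X (prd X C C) (prd X C C)) (pr1 X C C))
         (cmp X (prd X (prd X C C) (prd X C C)) (prd X C C) C (pr1 X (prd X C C) (prd X C C)) (pr1 X C C)))"

text \<open>\<open>lift_map\<close> and \<open>interchange\<close> are the maps \<open>\<ell>\<close> and \<open>c\<close> of the D-sequence axioms.\<close>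

definition D_axioms :: "('o,'m) clac \<Rightarrow> 'o \<Rightarrow> 'o \<Rightarrow> (nat \<Rightarrow> 'm) \<Rightarrow> bool" where
  "D_axioms X C B U \<longleftrightarrow>
     act X C (prd X C C) B (inj0 X C) (Dk (Suc 0) U) = szro X C B \<and>
     act X (prd X C (prd X C C)) (prd X C C) B (id_tms X C (sum_map X C)) (Dk (Suc 0) U)
       = sadd X (prd X C (prd X C C)) B
           (act X (prd X C (prd X C C)) (prd X C C) B (id_tms X C (pr0 X C C)) (Dk (Suc 0) U))
           (act X (prd X C (prd X C C)) (prd X C C) B (id_tms X C (pr1 X C C)) (Dk (Suc 0) U)) \<and>
     act X (prd X C C) (prd X (prd X C C) (prd X C C)) B (lift_map X C) (Dk (Suc (Suc 0)) U) = Dk (Suc 0) U \<and>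
     act X (prd X (prd X C C) (prd X C C)) (prd X (prd X C C) (prd X C C)) B (interchange X C) (Dk (Suc (Suc 0)) U)
       = Dk (Suc (Suc 0)) U"

lemma dseq_iff_D_axioms: "dseq X A B f \<longleftrightarrow> pre_dseq X A B f \<and> (\<forall>n. D_axioms X (Pn X n A) B (Dk n f))"
  unfolding dseq_def D_axioms_def Let_def inj0_def inj1_def sum_map_def id_tms_def lift_map_def interchange_def szro_def sadd_def
  by (simp add: Dk_def add.commute add.left_commute)

context cartesian_left_additive begin

lemma inj0_hom[simp]: "C \<in> obj X \<Longrightarrow> C' = C \<Longrightarrow> P = prd X C C \<Longrightarrow> inj0 X C \<in> hom X C' P"
  by (simp add: inj0_def)
lemma inj1_hom[simp]: "C \<in> obj X \<Longrightarrow> C' = C \<Longrightarrow> P = prd X C C \<Longrightarrow> inj1 X C \<in> hom X C' P"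
  by (simp add: inj1_def)
lemma sum_map_hom[simp]: "C \<in> obj X \<Longrightarrow> C' = C \<Longrightarrow> P = prd X C C \<Longrightarrow> sum_map X C \<in> hom X P C'"
  by (simp add: sum_map_def)
lemma id_tms_hom[simp]: "C \<in> obj X \<Longrightarrow> P = prd X C C \<Longrightarrow> Q = prd X C (prd X C C) \<Longrightarrow>
  k \<in> hom X (prd X C C) C \<Longrightarrow> id_tms X C k \<in> hom X Q P"
  by (simp add: id_tms_def)
lemma lift_map_hom[simp]: "C \<in> obj X \<Longrightarrow> P = prd X C C \<Longrightarrow> Q = prd X (prd X C C) (prd X C C) \<Longrightarrow>
  lift_map X C \<in> hom X P Q"
  by (simp add: lift_map_def)
lemma interchange_hom[simp]: "C \<in> obj X \<Longrightarrow> P = prd X (prd X C C) (prd X C C) \<Longrightarrow>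
  Q = prd X (prd X C C) (prd X C C) \<Longrightarrow> interchange X C \<in> hom X P Q"
  by (simp add: interchange_def)

lemma inj0_pr0[simp]: "C \<in> obj X \<Longrightarrow> cmp X C (prd X C C) C (inj0 X C) (pr0 X C C) = idm X C"
  by (simp add: inj0_def)
lemma spost_inj0[simp]: "A \<in> obj X \<Longrightarrow> C \<in> obj X \<Longrightarrow> pre_dseq X A C U \<Longrightarrow>
  spost X A C (prd X C C) U (inj0 X C) = spair X A C C U (szro X A C)"
  by (simp add: inj0_def)
lemma spost_inj1[simp]: "A \<in> obj X \<Longrightarrow> C \<in> obj X \<Longrightarrow> pre_dseq X A C U \<Longrightarrow>
  spost X A C (prd X C C) U (inj1 X C) = spair X A C C (szro X A C) U"
  by (simp add: inj1_def)
lemma id_tms_pr0[simp]: "C \<in> obj X \<Longrightarrow> k \<in> hom X (prd X C C) C \<Longrightarrow>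
  cmp X (prd X C (prd X C C)) (prd X C C) C (id_tms X C k) (pr0 X C C) = pr0 X C (prd X C C)"
  by (simp add: id_tms_def tms_def)
lemma spost_id_tms[simp]: "A \<in> obj X \<Longrightarrow> C \<in> obj X \<Longrightarrow> k \<in> hom X (prd X C C) C \<Longrightarrow> pre_dseq X A C U \<Longrightarrow>
  pre_dseq X A (prd X C C) V \<Longrightarrow>
  spost X A (prd X C (prd X C C)) (prd X C C) (spair X A C (prd X C C) U V) (id_tms X C k)
    = spair X A C C U (spost X A (prd X C C) C V k)"
  by (simp add: id_tms_def tms_def)
lemma spost_sum_map[simp]: "A \<in> obj X \<Longrightarrow> C \<in> obj X \<Longrightarrow> pre_dseq X A C U \<Longrightarrow> pre_dseq X A C V \<Longrightarrow>
  spost X A (prd X C C) C (spair X A C C U V) (sum_map X C) = sadd X A C U V"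
  by (simp add: sum_map_def)
lemma lift_map_pr0[simp]: "C \<in> obj X \<Longrightarrow>
  cmp X (prd X C C) (prd X (prd X C C) (prd X C C)) (prd X C C) (lift_map X C) (pr0 X (prd X C C) (prd X C C))
    = cmp X (prd X C C) C (prd X C C) (pr0 X C C) (inj0 X C)"
  by (simp add: lift_map_def tms_def)
lemma lift_map_pr0'[simp]: "C \<in> obj X \<Longrightarrow> D \<in> obj X \<Longrightarrow> k \<in> hom X (prd X C C) D \<Longrightarrow>
  cmp X (prd X C C) (prd X (prd X C C) (prd X C C)) D (lift_map X C) (cmp X (prd X (prd X C C) (prd X C C)) (prd X C C) D (pr0 X (prd X C C) (prd X C C)) k)
  = cmp X (prd X C C) C D (pr0 X C C) (cmp X C (prd X C C) D (inj0 X C) k)"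
  by (simp add: lift_map_def tms_def)
lemma lift_map_PM_pr0[simp]: "C \<in> obj X \<Longrightarrow>
  cmp X (prd X C C) (prd X (prd X C C) (prd X C C)) (prd X C C) (lift_map X C) (PM X (prd X C C) C (pr0 X C C))
    = cmp X (prd X C C) C (prd X C C) (pr0 X C C) (inj0 X C)"
  by (simp add: lift_map_def tms_def PM_def inj0_def inj1_def)
lemma spost_lift_map[simp]: "A \<in> obj X \<Longrightarrow> C \<in> obj X \<Longrightarrow> pre_dseq X A C U \<Longrightarrow> pre_dseq X A C V \<Longrightarrow>
  spost X A (prd X C C) (prd X (prd X C C) (prd X C C)) (spair X A C C U V) (lift_map X C)
    = spair X A (prd X C C) (prd X C C) (spair X A C C U (szro X A C)) (spair X A C C (szro X A C) V)"
  by (simp add: lift_map_def tms_def del: spost_inj0 spost_inj1) (simp add: inj0_def inj1_def)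
lemma interchange_pr0[simp]: "C \<in> obj X \<Longrightarrow>
  cmp X (prd X (prd X C C) (prd X C C)) (prd X (prd X C C) (prd X C C)) (prd X C C) (interchange X C) (pr0 X (prd X C C) (prd X C C))
    = PM X (prd X C C) C (pr0 X C C)"
  by (simp add: interchange_def PM_def tms_def)
lemma interchange_pr0'[simp]: "C \<in> obj X \<Longrightarrow> D \<in> obj X \<Longrightarrow> k \<in> hom X (prd X C C) D \<Longrightarrow>
  cmp X (prd X (prd X C C) (prd X C C)) (prd X (prd X C C) (prd X C C)) D (interchange X C) (cmp X (prd X (prd X C C) (prd X C C)) (prd X C C) D (pr0 X (prd X C C) (prd X C C)) k)
  = cmp X (prd X (prd X C C) (prd X C C)) (prd X C C) D (PM X (prd X C C) C (pr0 X C C)) k"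
  by (simp flip: cmp_assoc)
lemma interchange_PM_pr0[simp]: "C \<in> obj X \<Longrightarrow>
  cmp X (prd X (prd X C C) (prd X C C)) (prd X (prd X C C) (prd X C C)) (prd X C C) (interchange X C) (PM X (prd X C C) C (pr0 X C C))
    = pr0 X (prd X C C) (prd X C C)"
  by (simp add: interchange_def PM_def tms_def)
lemma spost_interchange[simp]: "A \<in> obj X \<Longrightarrow> C \<in> obj X \<Longrightarrow> pre_dseq X A C a \<Longrightarrow> pre_dseq X A C b \<Longrightarrow>
  pre_dseq X A C c \<Longrightarrow> pre_dseq X A C d \<Longrightarrow>
  spost X A (prd X (prd X C C) (prd X C C)) (prd X (prd X C C) (prd X C C)) (spair X A (prd X C C) (prd X C C) (spair X A C C a b) (spair X A C C c d)) (interchange X C)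
  = spair X A (prd X C C) (prd X C C) (spair X A C C a c) (spair X A C C b d)"
  by (simp add: interchange_def)

text \<open>The structure maps are natural with respect to additive maps \<open>h\<close>; additivity is
  needed exactly where a zero (\<open>inj0\<close>, \<open>lift_map\<close>) or a sum (\<open>sum_map\<close>) passes
  through \<open>h\<close>.\<close>

lemma inj0_natural: "A' \<in> obj X \<Longrightarrow> A \<in> obj X \<Longrightarrow> additive A' A h \<Longrightarrow>
  cmp X A' (prd X A' A') (prd X A A) (inj0 X A') (PM X A' A h)
    = cmp X A' A (prd X A A) h (inj0 X A)"
  using additive_hom[of A' A h] by (simp add: inj0_def PM_def tms_def additive_zro)
lemma id_tms_sum_map_natural: "A' \<in> obj X \<Longrightarrow> A \<in> obj X \<Longrightarrow> additive A' A h \<Longrightarrow>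
  cmp X (prd X A' (prd X A' A')) (prd X A' A') (prd X A A) (id_tms X A' (sum_map X A')) (PM X A' A h)
  = cmp X (prd X A' (prd X A' A')) (prd X A (prd X A A)) (prd X A A) (tms X A' (prd X A' A') A (prd X A A) h (PM X A' A h)) (id_tms X A (sum_map X A))"
  using additive_hom[of A' A h] by (simp add: id_tms_def sum_map_def PM_def tms_def additive_add)
lemma id_tms_pr0_natural: "A' \<in> obj X \<Longrightarrow> A \<in> obj X \<Longrightarrow> h \<in> hom X A' A \<Longrightarrow>
  cmp X (prd X A' (prd X A' A')) (prd X A' A') (prd X A A) (id_tms X A' (pr0 X A' A')) (PM X A' A h)
  = cmp X (prd X A' (prd X A' A')) (prd X A (prd X A A)) (prd X A A) (tms X A' (prd X A' A') A (prd X A A) h (PM X A' A h)) (id_tms X A (pr0 X A A))"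
  by (simp add: id_tms_def PM_def tms_def)
lemma id_tms_pr1_natural: "A' \<in> obj X \<Longrightarrow> A \<in> obj X \<Longrightarrow> h \<in> hom X A' A \<Longrightarrow>
  cmp X (prd X A' (prd X A' A')) (prd X A' A') (prd X A A) (id_tms X A' (pr1 X A' A')) (PM X A' A h)
  = cmp X (prd X A' (prd X A' A')) (prd X A (prd X A A)) (prd X A A) (tms X A' (prd X A' A') A (prd X A A) h (PM X A' A h)) (id_tms X A (pr1 X A A))"
  by (simp add: id_tms_def PM_def tms_def)
lemma lift_map_natural: "A' \<in> obj X \<Longrightarrow> A \<in> obj X \<Longrightarrow> additive A' A h \<Longrightarrow>
  cmp X (prd X A' A') (prd X (prd X A' A') (prd X A' A')) (prd X (prd X A A) (prd X A A)) (lift_map X A') (PM X (prd X A' A') (prd X A A) (PM X A' A h))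
  = cmp X (prd X A' A') (prd X A A) (prd X (prd X A A) (prd X A A)) (PM X A' A h) (lift_map X A)"
  using additive_hom[of A' A h] by (simp add: lift_map_def inj0_def inj1_def PM_def tms_def additive_zro)
lemma interchange_natural: "A' \<in> obj X \<Longrightarrow> A \<in> obj X \<Longrightarrow> h \<in> hom X A' A \<Longrightarrow>
  cmp X (prd X (prd X A' A') (prd X A' A')) (prd X (prd X A' A') (prd X A' A')) (prd X (prd X A A) (prd X A A)) (interchange X A') (PM X (prd X A' A') (prd X A A) (PM X A' A h))
  = cmp X (prd X (prd X A' A') (prd X A' A')) (prd X (prd X A A) (prd X A A)) (prd X (prd X A A) (prd X A A)) (PM X (prd X A' A') (prd X A A) (PM X A' A h)) (interchange X A)"
  by (simp add: interchange_def PM_def tms_def)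

text \<open>Since \<open>act_act\<close> merges nested actions, the axioms are also needed precomposed with an
  arbitrary map \<open>k\<close>.\<close>

lemma D_axioms_inj0:
  assumes "D_axioms X C B U" "C \<in> obj X" "B \<in> obj X" "Z \<in> obj X" "pre_dseq X C B U" "k \<in> hom X Z C"
  shows "act X Z (prd X C C) B (cmp X Z C (prd X C C) k (inj0 X C)) (Dk (Suc 0) U) = szro X Z B"
  using assms act_act[of Z C "prd X C C" B k "inj0 X C" "Dk (Suc 0) U", symmetric] by (simp add: D_axioms_def)

lemma D_axioms_sum_map:
  assumes "D_axioms X C B U" "C \<in> obj X" "B \<in> obj X" "Z \<in> obj X" "pre_dseq X C B U"
    and "k \<in> hom X Z (prd X C (prd X C C))"
  shows "act X Z (prd X C C) B (cmp X Z (prd X C (prd X C C)) (prd X C C) k (id_tms X C (sum_map X C))) (Dk (Suc 0) U)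
    = sadd X Z B
        (act X Z (prd X C C) B (cmp X Z (prd X C (prd X C C)) (prd X C C) k (id_tms X C (pr0 X C C))) (Dk (Suc 0) U))
        (act X Z (prd X C C) B (cmp X Z (prd X C (prd X C C)) (prd X C C) k (id_tms X C (pr1 X C C))) (Dk (Suc 0) U))"
  using assms act_act[of Z "prd X C (prd X C C)" "prd X C C" B k _ "Dk (Suc 0) U", symmetric]
  by (simp add: D_axioms_def)

lemma D_axioms_lift:
  assumes "D_axioms X C B U" "C \<in> obj X" "B \<in> obj X" "Z \<in> obj X" "pre_dseq X C B U" "k \<in> hom X Z (prd X C C)"
  shows "act X Z (prd X (prd X C C) (prd X C C)) B
      (cmp X Z (prd X C C) (prd X (prd X C C) (prd X C C)) k (lift_map X C)) (Dk (Suc (Suc 0)) U)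
    = act X Z (prd X C C) B k (Dk (Suc 0) U)"
  using assms act_act[of Z "prd X C C" "prd X (prd X C C) (prd X C C)" B k "lift_map X C" "Dk (Suc (Suc 0)) U", symmetric]
  by (simp add: D_axioms_def)

lemma D_axioms_interchange:
  assumes "D_axioms X C B U" "C \<in> obj X" "B \<in> obj X" "Z \<in> obj X" "pre_dseq X C B U"
    and "k \<in> hom X Z (prd X (prd X C C) (prd X C C))"
  shows "act X Z (prd X (prd X C C) (prd X C C)) B
      (cmp X Z (prd X (prd X C C) (prd X C C)) (prd X (prd X C C) (prd X C C)) k (interchange X C))
      (Dk (Suc (Suc 0)) U)
    = act X Z (prd X (prd X C C) (prd X C C)) B k (Dk (Suc (Suc 0)) U)"
  using assms act_act[of Z "prd X (prd X C C) (prd X C C)" "prd X (prd X C C) (prd X C C)" B k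
      "interchange X C" "Dk (Suc (Suc 0)) U", symmetric]
  by (simp add: D_axioms_def)

lemma D_axioms_act: "A' \<in> obj X \<Longrightarrow> A \<in> obj X \<Longrightarrow> B \<in> obj X \<Longrightarrow> additive A' A h \<Longrightarrow> pre_dseq X A B U \<Longrightarrow>
  D_axioms X A B U \<Longrightarrow>
  D_axioms X A' B (act X A' A B h U)"
  using additive_hom[of A' A h]
  by (simp add: D_axioms_def act_act inj0_natural id_tms_sum_map_natural id_tms_pr0_natural id_tms_pr1_natural lift_map_natural interchange_natural D_axioms_inj0 D_axioms_sum_map D_axioms_lift D_axioms_interchange)

lemma D_axioms_spair: "C \<in> obj X \<Longrightarrow> B1 \<in> obj X \<Longrightarrow> B2 \<in> obj X \<Longrightarrow> pre_dseq X C B1 U \<Longrightarrow>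
  pre_dseq X C B2 V \<Longrightarrow>
  D_axioms X C B1 U \<Longrightarrow> D_axioms X C B2 V \<Longrightarrow> D_axioms X C (prd X B1 B2) (spair X C B1 B2 U V)"
  by (simp add: D_axioms_def)
lemma D_axioms_sadd: "C \<in> obj X \<Longrightarrow> B \<in> obj X \<Longrightarrow> pre_dseq X C B U \<Longrightarrow> pre_dseq X C B V \<Longrightarrow>
  D_axioms X C B U \<Longrightarrow> D_axioms X C B V \<Longrightarrow> D_axioms X C B (sadd X C B U V)"
  by (simp add: D_axioms_def sadd_interchange)
lemma D_axioms_szro: "C \<in> obj X \<Longrightarrow> B \<in> obj X \<Longrightarrow> D_axioms X C B (szro X C B)"
  by (simp add: D_axioms_def)
lemma D_axioms_spost: "C \<in> obj X \<Longrightarrow> B \<in> obj X \<Longrightarrow> B' \<in> obj X \<Longrightarrow> additive B B' h \<Longrightarrow> pre_dseq X C B U \<Longrightarrow>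
  D_axioms X C B U \<Longrightarrow> D_axioms X C B' (spost X C B B' U h)"
  using additive_hom[of B B' h] by (simp add: D_axioms_def spost_szro spost_sadd)
lemma additive_iseq: "A \<in> obj X \<Longrightarrow> additive (Pn X n A) A (iseq X A n)"
  by (induct n) (auto intro!: additive_cmp additive_pr1 additive_idm)
lemma D_axioms_iseq: "A \<in> obj X \<Longrightarrow> D_axioms X A A (iseq X A)"
  by (simp add: D_axioms_def Dk_iseq inj0_def inj1_def id_tms_def sum_map_def tms_def lift_map_def interchange_def)

lemma D_axioms_terminal: "C \<in> obj X \<Longrightarrow> pre_dseq X C (trm X) U \<Longrightarrow> D_axioms X C (trm X) U"
  unfolding D_axioms_def
  by (intro conjI; rule pre_dseq_terminal_eq[where C = C] pre_dseq_terminal_eq[where C = "prd X C C"]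
        pre_dseq_terminal_eq[where C = "prd X C (prd X C C)"]
        pre_dseq_terminal_eq[where C = "prd X (prd X C C) (prd X C C)"]; simp)

section \<open>D-sequences\<close>

lemma dseq_pre_dseq: "dseq X A B F \<Longrightarrow> pre_dseq X A B F" by (simp add: dseq_iff_D_axioms)
lemma dseq_D_axioms: "dseq X A B F \<Longrightarrow>
  D_axioms X (Pn X n A) B (Dk n F)" by (simp add: dseq_iff_D_axioms)
lemma dseq_D_axioms_0: "dseq X A B F \<Longrightarrow> D_axioms X A B F" using dseq_D_axioms[of A B F 0] by simp

lemma dseq_iseq: "A \<in> obj X \<Longrightarrow> dseq X A A (iseq X A)"
  by (simp add: dseq_iff_D_axioms Dk_iseq D_axioms_spost additive_iseq D_axioms_iseq del: iseq.simps)
lemma dseq_spost: "A \<in> obj X \<Longrightarrow> B \<in> obj X \<Longrightarrow> B' \<in> obj X \<Longrightarrow> additive B B' h \<Longrightarrow> dseq X A B F \<Longrightarrow>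
  dseq X A B' (spost X A B B' F h)"
  using additive_hom[of B B' h] by (simp add: dseq_iff_D_axioms D_axioms_spost)
lemma dseq_spair: "C \<in> obj X \<Longrightarrow> B1 \<in> obj X \<Longrightarrow> B2 \<in> obj X \<Longrightarrow> dseq X C B1 U \<Longrightarrow> dseq X C B2 V \<Longrightarrow>
  dseq X C (prd X B1 B2) (spair X C B1 B2 U V)"
  by (simp add: dseq_iff_D_axioms D_axioms_spair)
lemma dseq_sadd: "C \<in> obj X \<Longrightarrow> B \<in> obj X \<Longrightarrow> dseq X C B U \<Longrightarrow> dseq X C B V \<Longrightarrow>
  dseq X C B (sadd X C B U V)"
  by (simp add: dseq_iff_D_axioms D_axioms_sadd)
lemma dseq_szro: "C \<in> obj X \<Longrightarrow> B \<in> obj X \<Longrightarrow> dseq X C B (szro X C B)"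
  by (simp add: dseq_iff_D_axioms D_axioms_szro)

lemma Dk_Tseq: "A \<in> obj X \<Longrightarrow> B \<in> obj X \<Longrightarrow> pre_dseq X A B F \<Longrightarrow>
  Dk k (Tseq X A B F)
    = spair X (Pn X (Suc k) A) B B (act X (Pn X (Suc k) A) (Pn X k A) B (Pnm X k (prd X A A) A (pr0 X A A)) (Dk k F)) (Dk (Suc k) F)"
  by (simp add: Tseq_eq_spair)
lemma dseq_Tseq:
  assumes A: "A \<in> obj X" and B: "B \<in> obj X" and F: "dseq X A B F"
  shows "dseq X (prd X A A) (prd X B B) (Tseq X A B F)"
proof -
  have pF: "pre_dseq X A B F" using F by (rule dseq_pre_dseq)
  have "D_axioms X (Pn X (Suc n) A) (prd X B B) (Dk n (Tseq X A B F))" for n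
  proof -
    have "additive (Pn X (Suc n) A) (Pn X n A) (Pnm X n (prd X A A) A (pr0 X A A))"
      using additive_Pnm[OF _ A additive_pr0[OF A A], of n] A by simp
    then have "D_axioms X (Pn X (Suc n) A) B
        (act X (Pn X (Suc n) A) (Pn X n A) B (Pnm X n (prd X A A) A (pr0 X A A)) (Dk n F))"
      using A B pF dseq_D_axioms[OF F, of n] by (intro D_axioms_act) simp_all
    moreover have "D_axioms X (Pn X (Suc n) A) B (Dk (Suc n) F)"
      using dseq_D_axioms[OF F, of "Suc n"] by simp
    ultimately show ?thesis
      using A B pF by (simp add: Dk_Tseq D_axioms_spair)
  qed
  then show ?thesis using A B pF by (simp add: dseq_iff_D_axioms)
qed

lemma dseq_Tn: "A \<in> obj X \<Longrightarrow> B \<in> obj X \<Longrightarrow> dseq X A B F \<Longrightarrow>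
  dseq X (Pn X n A) (Pn X n B) (Tn X n A B F)"
  by (induct n) (simp_all add: dseq_Tseq)

text \<open>Precomposing \<open>T(F)\<close> with a structure map amounts to postcomposing a suitable
  sequence with the corresponding structure map of the codomain; this uses the axioms of \<open>F\<close>.\<close>

lemma act_inj0_Tseq: "C \<in> obj X \<Longrightarrow> C' \<in> obj X \<Longrightarrow> pre_dseq X C C' F \<Longrightarrow> D_axioms X C C' F \<Longrightarrow>
  act X C (prd X C C) (prd X C' C') (inj0 X C) (Tseq X C C' F)
    = spost X C C' (prd X C' C') F (inj0 X C')"
  by (simp add: Tseq_eq_spair act_act D_axioms_def)
lemma act_lift_map_Tseq: "C \<in> obj X \<Longrightarrow> C' \<in> obj X \<Longrightarrow> pre_dseq X C C' F \<Longrightarrow> D_axioms X C C' F \<Longrightarrow>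
  act X (prd X C C) (prd X (prd X C C) (prd X C C)) (prd X (prd X C' C') (prd X C' C')) (lift_map X C) (Tseq X (prd X C C) (prd X C' C') (Tseq X C C' F))
  = spost X (prd X C C) (prd X C' C') (prd X (prd X C' C') (prd X C' C')) (Tseq X C C' F) (lift_map X C')"
  by (simp add: Tseq_eq_spair act_act D_axioms_def D_axioms_inj0)
lemma act_interchange_Tseq: "C \<in> obj X \<Longrightarrow> C' \<in> obj X \<Longrightarrow> pre_dseq X C C' F \<Longrightarrow> D_axioms X C C' F \<Longrightarrow>
  act X (prd X (prd X C C) (prd X C C)) (prd X (prd X C C) (prd X C C)) (prd X (prd X C' C') (prd X C' C')) (interchange X C) (Tseq X (prd X C C) (prd X C' C') (Tseq X C C' F))
  = spost X (prd X (prd X C C) (prd X C C)) (prd X (prd X C' C') (prd X C' C')) (prd X (prd X C' C') (prd X C' C')) (Tseq X (prd X C C) (prd X C' C') (Tseq X C C' F)) (interchange X C')"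
  by (simp add: Tseq_eq_spair act_act D_axioms_def)

lemma act_id_tms_Tseq:
  assumes "C \<in> obj X" "C' \<in> obj X" "pre_dseq X C C' F" "D_axioms X C C' F"
  defines "\<Phi> \<equiv> spair X (prd X C (prd X C C)) C' (prd X C' C')
      (act X (prd X C (prd X C C)) C C' (pr0 X C (prd X C C)) F)
      (spair X (prd X C (prd X C C)) C' C'
         (act X (prd X C (prd X C C)) (prd X C C) C' (id_tms X C (pr0 X C C)) (Dk (Suc 0) F))
         (act X (prd X C (prd X C C)) (prd X C C) C' (id_tms X C (pr1 X C C)) (Dk (Suc 0) F)))"
  shows "act X (prd X C (prd X C C)) (prd X C C) (prd X C' C') (id_tms X C (sum_map X C)) (Tseq X C C' F)
      = spost X (prd X C (prd X C C)) (prd X C' (prd X C' C')) (prd X C' C') \<Phi> (id_tms X C' (sum_map X C'))"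
    and "act X (prd X C (prd X C C)) (prd X C C) (prd X C' C') (id_tms X C (pr0 X C C)) (Tseq X C C' F)
      = spost X (prd X C (prd X C C)) (prd X C' (prd X C' C')) (prd X C' C') \<Phi> (id_tms X C' (pr0 X C' C'))"
    and "act X (prd X C (prd X C C)) (prd X C C) (prd X C' C') (id_tms X C (pr1 X C C)) (Tseq X C C' F)
      = spost X (prd X C (prd X C C)) (prd X C' (prd X C' C')) (prd X C' C') \<Phi> (id_tms X C' (pr1 X C' C'))"
  using assms by (simp_all add: Tseq_eq_spair act_act D_axioms_def)

text \<open>Each axiom for \<open>T(F) * D[G]\<close> is moved through \<open>T(F)\<close> (with the lemmas above and
  \<open>dcomp_spost\<close>) onto \<open>D[G]\<close>, where it holds by the axioms of \<open>G\<close>.  The \<open>spost\<close>-rules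
  of the structure maps are disabled so that the structure map stays visible to \<open>dcomp_spost\<close>.\<close>

lemma D_axioms_dcomp:
  assumes obj: "C \<in> obj X" "C' \<in> obj X" "E \<in> obj X"
    and F: "pre_dseq X C C' F" "D_axioms X C C' F"
    and G: "pre_dseq X C' E G" "D_axioms X C' E G"
  shows "D_axioms X C E (dcomp X C C' E F G)"
proof -
  note G_axioms = G(2)[unfolded D_axioms_def]
  have D1: "Dk (Suc 0) (dcomp X C C' E F G)
      = dcomp X (prd X C C) (prd X C' C') E (Tseq X C C' F) (Dk (Suc 0) G)"
    by (simp add: Dk_dcomp)
  have D2: "Dk (Suc (Suc 0)) (dcomp X C C' E F G)
      = dcomp X (prd X (prd X C C) (prd X C C)) (prd X (prd X C' C') (prd X C' C')) E
          (Tseq X (prd X C C) (prd X C' C') (Tseq X C C' F)) (Dk (Suc (Suc 0)) G)"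
    by (simp add: Dk_dcomp)
  have "act X C (prd X C C) E (inj0 X C) (Dk (Suc 0) (dcomp X C C' E F G)) = szro X C E"
    unfolding D1 using obj F G G_axioms
    by (simp add: act_dcomp act_inj0_Tseq dcomp_spost del: spost_inj0)
  moreover have "act X (prd X C (prd X C C)) (prd X C C) E (id_tms X C (sum_map X C)) (Dk (Suc 0) (dcomp X C C' E F G))
      = sadd X (prd X C (prd X C C)) E
          (act X (prd X C (prd X C C)) (prd X C C) E (id_tms X C (pr0 X C C)) (Dk (Suc 0) (dcomp X C C' E F G)))
          (act X (prd X C (prd X C C)) (prd X C C) E (id_tms X C (pr1 X C C)) (Dk (Suc 0) (dcomp X C C' E F G)))"
    unfolding D1 using obj F G G_axioms
    by (simp add: act_dcomp act_id_tms_Tseq dcomp_spost del: spost_id_tms act_spair)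
  moreover have "act X (prd X C C) (prd X (prd X C C) (prd X C C)) E (lift_map X C)
      (Dk (Suc (Suc 0)) (dcomp X C C' E F G)) = Dk (Suc 0) (dcomp X C C' E F G)"
    unfolding D1 D2 using obj F G G_axioms
    by (simp add: act_dcomp act_lift_map_Tseq dcomp_spost del: spost_lift_map Tseq_spost)
  moreover have "act X (prd X (prd X C C) (prd X C C)) (prd X (prd X C C) (prd X C C)) E (interchange X C)
      (Dk (Suc (Suc 0)) (dcomp X C C' E F G)) = Dk (Suc (Suc 0)) (dcomp X C C' E F G)"
    unfolding D2 using obj F G G_axioms
    by (simp add: act_dcomp act_interchange_Tseq dcomp_spost del: spost_interchange Tseq_spost)
  ultimately show ?thesis
    by (simp add: D_axioms_def)
qed

lemma dseq_dcomp:
  assumes obj: "A \<in> obj X" "B \<in> obj X" "E \<in> obj X" and F: "dseq X A B F" and G: "dseq X B E G"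
  shows "dseq X A E (dcomp X A B E F G)"
proof -
  have pF: "pre_dseq X A B F" and pG: "pre_dseq X B E G"
    using F G by (simp_all add: dseq_pre_dseq)
  have "D_axioms X (Pn X n A) E (dcomp X (Pn X n A) (Pn X n B) E (Tn X n A B F) (Dk n G))" for n
    using obj pF pG dseq_D_axioms_0[OF dseq_Tn[OF obj(1,2) F, of n]] dseq_D_axioms[OF G, of n]
    by (intro D_axioms_dcomp) simp_all
  then show ?thesis
    using obj pF pG by (simp add: dseq_iff_D_axioms Dk_dcomp)
qed

lemma dseq_bng: "A \<in> obj X \<Longrightarrow> dseq X A (trm X) (\<lambda>n. bng X (Pn X n A))"
  by (simp add: dseq_iff_D_axioms pre_dseq_def D_axioms_terminal)

section \<open>The category of D-sequences\<close>

lemma DX_obj[simp]: "obj (DX X) = obj X" by (simp add: DX_def)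
lemma DX_hom[simp]: "hom (DX X) A B = {f. dseq X A B f}" by (simp add: DX_def)
lemma DX_idm[simp]: "idm (DX X) = iseq X" by (simp add: DX_def)
lemma DX_cmp[simp]: "cmp (DX X) = dcomp X" by (simp add: DX_def)
lemma DX_trm[simp]: "trm (DX X) = trm X" by (simp add: DX_def)
lemma DX_bng[simp]: "bng (DX X) A = (\<lambda>n. bng X (Pn X n A))" by (simp add: DX_def)
lemma DX_prd[simp]: "prd (DX X) = prd X" by (simp add: DX_def)
lemma DX_pr0[simp]: "pr0 (DX X) A B
  = spost X (prd X A B) (prd X A B) A (iseq X (prd X A B)) (pr0 X A B)"
  by (simp add: DX_def spost_def)
lemma DX_pr1[simp]: "pr1 (DX X) A B
  = spost X (prd X A B) (prd X A B) B (iseq X (prd X A B)) (pr1 X A B)"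
  by (simp add: DX_def spost_def)
lemma DX_pair[simp]: "pair (DX X) C A B f g = spair X C A B f g" by (simp add: DX_def spair_def)
lemma DX_zro[simp]: "zro (DX X) A B = szro X A B" by (simp add: DX_def szro_def)
lemma DX_add[simp]: "add (DX X) A B f g = sadd X A B f g" by (simp add: DX_def sadd_def)

lemma DX_is_category: "is_category (DX X)"
  unfolding is_category_def
  by (auto simp: dseq_iseq dseq_dcomp dcomp_iseq_left dcomp_iseq_right dcomp_assoc dseq_pre_dseq)

lemma DX_has_finite_products: "has_finite_products (DX X)"
  unfolding has_finite_products_def
  by (auto simp: dseq_bng dseq_pre_dseq dseq_spair dseq_spost dseq_iseq additive_pr0 additive_pr1
      dcomp_iseq_spost intro: pre_dseq_terminal_eq)

lemma DX_is_left_additive: "is_left_additive (DX X)"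
  unfolding is_left_additive_def
  by (auto simp: dseq_szro dseq_sadd sadd_assoc dseq_pre_dseq intro: sadd_comm)

lemma DX_projections_additive: "projections_additive (DX X)"
  unfolding projections_additive_def
  by (auto simp: dcomp_iseq_spost dseq_pre_dseq spost_sadd spost_szro additive_pr0 additive_pr1)

end

theorem proposition4p7:
  fixes X :: "('o, 'm) clac"
  assumes "is_CLAC X"
  shows "is_CLAC (DX X)"
proof -
  interpret cartesian_left_additive X
    by unfold_locales (rule assms)
  show ?thesis
    unfolding is_CLAC_def
    using DX_is_category DX_has_finite_products DX_is_left_additive DX_projections_additive
    by blast
qed

end
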